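(* Let $\mathcal{T},\mathcal{W}\in\mathbb{K}^{R\times R\times K}$. Assume $\mathcal{T}$ has $\mathbb{K}$-rank $R$ with CPD $[\![\mathbf{A},\mathbf{B},\mathbf{C}]\!]$ where $\mathbf{A},\mathbf{B}\in\mathbb{K}^{R\times R}$ are invertible and the columns of $\mathbf{C}$ have unit norm; let $\mathscr{L}_1,\dots,\mathscr{L}_R$ be the spectrum of $\mathcal{T}$ (the spans of the columns of $\mathbf{C}$), and set $\mathcal{E}=\mathcal{T}-\mathcal{W}$. If $\mathscr{W}$ is a JGE value of $\mathcal{W}$ with geometric multiplicity at least one, then $$\min_k\chi(\mathscr{L}_k,\mathscr{W})\leq\sqrt{R}\,\big\|\mathcal{E}\cdot_1\mathbf{A}^{-1}\cdot_2\mathbf{B}^{-1}\cdot_3\mathbf{P}_{\mathscr{W}^\perp}\big\|_{\mathrm{sp}}\leq\frac{\sqrt{R}\,\|\mathcal{E}\|_{\mathrm{sp}}}{\sigma_{\min}(\mathbf{A})\sigma_{\min}(\mathbf{B})},$$ where $\mathbf{P}_{\mathscr{W}^\perp}$ is the orthogonal projection of $\mathbb{K}^K$ onto the orthogonal complement of $\mathscr{W}$. Consequently, if $\mathcal{W}$ is slice mix invertible of border $\mathbb{K}$-rank $R$, then $$\mathrm{sv}[\mathcal{T},\mathcal{W}]\leq\sqrt{R}\,\big\|\mathcal{E}\cdot_1\mathbf{A}^{-1}\cdot_2\mathbf{B}^{-1}\big\|_{\mathrm{sp}}\leq\frac{\sqrt{R}\,\|\mathcal{E}\|_{\mathrm{sp}}}{\sigma_{\min}(\mathbf{A})\sigma_{\min}(\mathbf{B})}.$$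 Moreover, the factor $\sqrt{R}$ may be dropped from all these inequalities in each of the following cases: (1) $K=2$; (2) $\mathcal{W}$ is slice mix invertible and has $\mathbb{K}$-rank $R$ with a CPD $[\![\mathbf{A}_{\mathcal{W}},\mathbf{B}_{\mathcal{W}},\mathbf{C}_{\mathcal{W}}]\!]$ in which $\mathbf{A}_{\mathcal{W}}=\mathbf{A}$ or $\mathbf{B}_{\mathcal{W}}=\mathbf{B}$. In particular, in these cases $\mathrm{sv}[\mathcal{T},\mathcal{W}]\leq\|\mathcal{E}\cdot_1\mathbf{A}^{-1}\cdot_2\mathbf{B}^{-1}\|_{\mathrm{sp}}\leq\|\mathcal{E}\|_{\mathrm{sp}}/(\sigma_{\min}(\mathbf{A})\sigma_{\min}(\mathbf{B}))$.
   Context: $\mathbb{K}$ denotes $\mathbb{R}$ or $\mathbb{C}$; $\sigma_{\min}$ is the smallest singular value; $\cdot_i\mathbf{M}$ applies $\mathbf{M}$ to every mode-$i$ fiber. CPD $[\![\mathbf{A},\mathbf{B},\mathbf{C}]\!]=\sum_r\mathbf{a}_r\otimes\mathbf{b}_r\otimes\mathbf{c}_r$ with the minimal number of terms; $\mathbb{K}$-rank and border $\mathbb{K}$-rank (least $R$ such that the tensor is a limit of tensors of $\mathbb{K}$-rank at most $R$) as usual. For $\mathcal{X}$ with slices $\mathbf{X}_k$: slice mix invertible means some linear combination of slices is invertible; a nonzero $\mathbf{x}$ is a JGE vector if $\mathbf{X}_\ell\mathbf{x}=\lambda_\ell\mathbf{y}$ for all $\ell$ for some $\boldsymbol{\lambda}$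 and nonzero $\mathbf{y}$, and $\mathrm{span}(\boldsymbol{\lambda})$ is then a JGE value; its geometric multiplicity is the dimension of the span of JGE vectors paired with it. With $p_{\mathcal{X}}(\boldsymbol{\gamma})=\det(\sum_k\gamma_k\mathbf{X}_k)$, if $p_{\mathcal{X}}$ is a product of $R$ linear forms $\prod_r(\sum_k\lambda_{r,k}\gamma_k)$ the spectrum of $\mathcal{X}$ is the list $\mathrm{span}(\boldsymbol{\lambda}_r)$, $r=1,\dots,R$. Chordal metric $\chi$: sine of the angle between one-dimensional subspaces. Spectral variation: $\mathrm{sv}[\mathcal{T}_1,\mathcal{T}_2]=\max_i\min_j\chi(\mathscr{L}_{1,j},\mathscr{L}_{2,i})$ for spectra $\{\mathscr{L}_{1,j}\},\{\mathscr{L}_{2,i}\}$. Spectral norm $\|\mathcal{M}\|_{\mathrm{sp}}=\max_{\|\mathbf{x}\|=\|\mathbf{y}\|=\|\mathbf{z}\|=1}|\mathcal{M}\cdot_1\mathbf{x}\cdot_2\mathbf{y}\cdot_3\mathbf{z}|$. *)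

theory Defs
  imports "HOL-Analysis.Analysis"
begin

text \<open>The scalar field K is encoded by a set Ks of complex numbers,
  Ks = Reals (K = R) or Ks = UNIV (K = C). All objects are complex-valued and are
  required to take values in Ks. A tensor in K^(I x J x K) is a function
  of type 'i => 'j => 'k => complex over finite index types; R = CARD('r),
  K = CARD('k). Matrices are complex^'col^'row (entry A$i$j).\<close>

type_synonym ('i,'j,'k) tensor = "'i \<Rightarrow> 'j \<Rightarrow> 'k \<Rightarrow> complex"

definition field_K :: "complex set \<Rightarrow> bool" where
  "field_K Ks \<longleftrightarrow> Ks = \<real> \<or> Ks = UNIV"

definition vec_in :: "complex set \<Rightarrow> complex^'n \<Rightarrow> bool" where
  "vec_in Ks v \<longleftrightarrow> (\<forall>i. v$i \<in> Ks)"

definition mat_in :: "complex set \<Rightarrow> complex^'n^'m \<Rightarrow> bool" where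
  "mat_in Ks M \<longleftrightarrow> (\<forall>i j. M$i$j \<in> Ks)"

definition tensor_in :: "complex set \<Rightarrow> ('i,'j,'k) tensor \<Rightarrow> bool" where
  "tensor_in Ks X \<longleftrightarrow> (\<forall>i j k. X i j k \<in> Ks)"

definition hinner :: "complex^'n \<Rightarrow> complex^'n \<Rightarrow> complex" where
  "hinner u v = (\<Sum>i\<in>UNIV. u$i * cnj (v$i))"

definition cpd :: "complex^'r^'i \<Rightarrow> complex^'r^'j \<Rightarrow> complex^'r^'k \<Rightarrow> ('i,'j,'k) tensor" where
  "cpd A B C = (\<lambda>i j k. \<Sum>r\<in>UNIV. A$i$r * B$j$r * C$k$r)"

definition rank_le :: "complex set \<Rightarrow> ('i::finite,'j::finite,'k::finite) tensor \<Rightarrow> nat \<Rightarrow> bool" where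
  "rank_le Ks X n \<longleftrightarrow> (\<exists>(a::nat \<Rightarrow> complex^'i) (b::nat \<Rightarrow> complex^'j) (c::nat \<Rightarrow> complex^'k).
      (\<forall>r<n. vec_in Ks (a r) \<and> vec_in Ks (b r) \<and> vec_in Ks (c r)) \<and>
      X = (\<lambda>i j k. \<Sum>r<n. (a r)$i * (b r)$j * (c r)$k))"

definition K_rank :: "complex set \<Rightarrow> ('i::finite,'j::finite,'k::finite) tensor \<Rightarrow> nat" where
  "K_rank Ks X = (LEAST n. rank_le Ks X n)"

definition border_K_rank :: "complex set \<Rightarrow> ('i::finite,'j::finite,'k::finite) tensor \<Rightarrow> nat" where
  "border_K_rank Ks X = (LEAST n. \<exists>S :: nat \<Rightarrow> ('i,'j,'k) tensor.
      (\<forall>m. tensor_in Ks (S m) \<and> K_rank Ks (S m) \<le> n) \<and>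
      (\<forall>i j k. (\<lambda>m. S m i j k) \<longlonglongrightarrow> X i j k))"

definition slice :: "('r,'r,'k) tensor \<Rightarrow> 'k \<Rightarrow> complex^'r^'r" where
  "slice X k = (\<chi> i j. X i j k)"

definition slice_comb :: "('r,'r,'k) tensor \<Rightarrow> complex^'k \<Rightarrow> complex^'r^'r" where
  "slice_comb X \<gamma> = (\<chi> i j. \<Sum>k\<in>UNIV. \<gamma>$k * X i j k)"

definition slice_mix_invertible :: "complex set \<Rightarrow> ('r::finite,'r,'k::finite) tensor \<Rightarrow> bool" where
  "slice_mix_invertible Ks X \<longleftrightarrow> (\<exists>\<gamma>. vec_in Ks \<gamma> \<and> det (slice_comb X \<gamma>) \<noteq> 0)"

definition kspan :: "complex set \<Rightarrow> complex^'n \<Rightarrow> (complex^'n) set" where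
  "kspan Ks v = {c *s v | c. c \<in> Ks}"

definition JGE_pair :: "complex set \<Rightarrow> ('r::finite,'r,'k::finite) tensor \<Rightarrow> complex^'r \<Rightarrow> complex^'k \<Rightarrow> bool" where
  "JGE_pair Ks X x lam \<longleftrightarrow> vec_in Ks x \<and> x \<noteq> 0 \<and> vec_in Ks lam \<and>
     (\<exists>y. vec_in Ks y \<and> y \<noteq> 0 \<and> (\<forall>l. slice X l *v x = lam$l *s y))"

text \<open>JGE value span(lambda); lambda nonzero so that it is a one-dimensional subspace
  (the chordal metric is only defined for lines).\<close>
definition JGE_value :: "complex set \<Rightarrow> ('r::finite,'r,'k::finite) tensor \<Rightarrow> (complex^'k) set \<Rightarrow> bool" where
  "JGE_value Ks X L \<longleftrightarrow> (\<exists>x lam. JGE_pair Ks X x lam \<and> lam \<noteq> 0 \<and> L = kspan Ks lam)"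

definition K_indep :: "complex set \<Rightarrow> nat \<Rightarrow> (nat \<Rightarrow> complex^'n) \<Rightarrow> bool" where
  "K_indep Ks n xs \<longleftrightarrow> (\<forall>c. (\<forall>i<n. c i \<in> Ks) \<longrightarrow> (\<Sum>i<n. c i *s xs i) = 0 \<longrightarrow> (\<forall>i<n. c i = 0))"

definition geom_mult :: "complex set \<Rightarrow> ('r::finite,'r,'k::finite) tensor \<Rightarrow> (complex^'k) set \<Rightarrow> nat" where
  "geom_mult Ks X L = (GREATEST n. \<exists>xs. (\<forall>i<n. \<exists>lam. JGE_pair Ks X (xs i) lam \<and> L = kspan Ks lam)
                                         \<and> K_indep Ks n xs)"

definition line_rep :: "complex set \<Rightarrow> (complex^'n) set \<Rightarrow> complex^'n" where
  "line_rep Ks L = (SOME u. u \<noteq> 0 \<and> L = kspan Ks u)"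

definition chordal_vec :: "complex^'n \<Rightarrow> complex^'n \<Rightarrow> real" where
  "chordal_vec u v = sqrt (1 - (cmod (hinner u v))\<^sup>2 / ((norm u)\<^sup>2 * (norm v)\<^sup>2))"

definition chordal :: "complex set \<Rightarrow> (complex^'n) set \<Rightarrow> (complex^'n) set \<Rightarrow> real" where
  "chordal Ks L1 L2 = chordal_vec (line_rep Ks L1) (line_rep Ks L2)"

definition proj_perp :: "complex set \<Rightarrow> (complex^'k) set \<Rightarrow> complex^'k^'k" where
  "proj_perp Ks L = (let w = line_rep Ks L in
      (\<chi> i j. (if i = j then 1 else 0) - w$i * cnj (w$j) / complex_of_real ((norm w)\<^sup>2)))"

definition mode1 :: "('i,'j,'k) tensor \<Rightarrow> complex^'i^'a \<Rightarrow> ('a,'j,'k) tensor" where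
  "mode1 X M = (\<lambda>a j k. \<Sum>i\<in>UNIV. M$a$i * X i j k)"
definition mode2 :: "('i,'j,'k) tensor \<Rightarrow> complex^'j^'a \<Rightarrow> ('i,'a,'k) tensor" where
  "mode2 X M = (\<lambda>i a k. \<Sum>j\<in>UNIV. M$a$j * X i j k)"
definition mode3 :: "('i,'j,'k) tensor \<Rightarrow> complex^'k^'a \<Rightarrow> ('i,'j,'a) tensor" where
  "mode3 X M = (\<lambda>i j a. \<Sum>k\<in>UNIV. M$a$k * X i j k)"

definition sp_norm :: "complex set \<Rightarrow> ('i::finite,'j::finite,'k::finite) tensor \<Rightarrow> real" where
  "sp_norm Ks M = Sup {cmod (\<Sum>i\<in>UNIV. \<Sum>j\<in>UNIV. \<Sum>k\<in>UNIV. M i j k * x$i * y$j * z$k) | x y z.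
       vec_in Ks x \<and> vec_in Ks y \<and> vec_in Ks z \<and> norm x = 1 \<and> norm y = 1 \<and> norm z = 1}"

definition sigma_min :: "complex^'n^'n \<Rightarrow> real" where
  "sigma_min A = Inf {norm (A *v x) | x. norm x = 1}"

definition is_spectrum :: "complex set \<Rightarrow> ('r::finite,'r,'k::finite) tensor \<Rightarrow> ('r \<Rightarrow> complex^'k) \<Rightarrow> bool" where
  "is_spectrum Ks X \<Lambda> \<longleftrightarrow> (\<forall>r. vec_in Ks (\<Lambda> r) \<and> \<Lambda> r \<noteq> 0) \<and>
     (\<forall>\<gamma>. vec_in Ks \<gamma> \<longrightarrow> det (slice_comb X \<gamma>) = (\<Prod>r\<in>UNIV. \<Sum>k\<in>UNIV. (\<Lambda> r)$k * \<gamma>$k))"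

definition spec_var :: "complex set \<Rightarrow> ('r::finite \<Rightarrow> complex^'k) \<Rightarrow> ('r \<Rightarrow> complex^'k) \<Rightarrow> real" where
  "spec_var Ks \<Lambda>1 \<Lambda>2 = Max (range (\<lambda>i. Min (range (\<lambda>j. chordal Ks (kspan Ks (\<Lambda>1 j)) (kspan Ks (\<Lambda>2 i))))))"

end

(* Write E = T - W and let P project onto the orthogonal complement of a JGE value lam of W with
   JGE vector x, i.e. W_l x = lam_l y.  Since P lam = 0, the contribution of W cancels when
   F = E x_1 A^-1 x_2 B^-1 x_3 P is tested against z = B^T x in the second mode:
   F(alpha, z, beta) = sum_r alpha_r z_r <beta, P c_r>.  Hence the vector (z_r <beta, P c_r>)_r has
   norm at most ||F|| ||z|| ||beta||, while ||P c_r|| is the chordal distance between span(c_r) and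
   span(lam).  Taking beta dual to P c_a for a component z_a of maximal modulus costs the factor
   sqrt R.  For K = 2 the range of P is a line, so a single beta serves all r at once; if W shares
   B with T there is a JGE vector with z a coordinate vector, and a shared A reduces to this by
   exchanging the first two modes.  The upper bounds are submultiplicativity of the spectral norm
   under mode products.  For the spectral variation, every spectral line of W is a JGE value: for a
   CPD this follows from det W(gamma) = det A det B prod_r <c_r, gamma>, and it passes to limits of
   tensors of rank at most R by compactness of normalized JGE vectors and eigenvalue directions. *)

theory Submission
  imports Defs
begin

section \<open>Scalars and vectors over K\<close>

lemma field_K_0 [simp]: "field_K Ks \<Longrightarrow> 0 \<in> Ks"
  and field_K_1 [simp]: "field_K Ks \<Longrightarrow> 1 \<in> Ks"
  and field_K_of_real [simp]: "field_K Ks \<Longrightarrow> complex_of_real r \<in> Ks"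
  by (auto simp: field_K_def)

lemma field_K_of_int [simp]: "field_K Ks \<Longrightarrow> complex_of_int n \<in> Ks"
  by (auto simp: field_K_def)

lemma field_K_of_nat [simp]: "field_K Ks \<Longrightarrow> complex_of_nat n \<in> Ks"
  by (auto simp: field_K_def)

lemma field_K_add: "field_K Ks \<Longrightarrow> a \<in> Ks \<Longrightarrow> b \<in> Ks \<Longrightarrow> a + b \<in> Ks"
  and field_K_diff: "field_K Ks \<Longrightarrow> a \<in> Ks \<Longrightarrow> b \<in> Ks \<Longrightarrow> a - b \<in> Ks"
  and field_K_mult: "field_K Ks \<Longrightarrow> a \<in> Ks \<Longrightarrow> b \<in> Ks \<Longrightarrow> a * b \<in> Ks"
  and field_K_divide: "field_K Ks \<Longrightarrow> a \<in> Ks \<Longrightarrow> b \<in> Ks \<Longrightarrow> a / b \<in> Ks"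
  and field_K_uminus: "field_K Ks \<Longrightarrow> a \<in> Ks \<Longrightarrow> - a \<in> Ks"
  and field_K_inverse: "field_K Ks \<Longrightarrow> a \<in> Ks \<Longrightarrow> inverse a \<in> Ks"
  and field_K_cnj: "field_K Ks \<Longrightarrow> a \<in> Ks \<Longrightarrow> cnj a \<in> Ks"
  and field_K_power: "field_K Ks \<Longrightarrow> a \<in> Ks \<Longrightarrow> a ^ n \<in> Ks"
  by (auto simp: field_K_def Reals_cnj_iff)

lemma field_K_sum: "field_K Ks \<Longrightarrow> (\<And>x. x \<in> S \<Longrightarrow> f x \<in> Ks) \<Longrightarrow> sum f S \<in> Ks"
  and field_K_prod: "field_K Ks \<Longrightarrow> (\<And>x. x \<in> S \<Longrightarrow> f x \<in> Ks) \<Longrightarrow> prod f S \<in> Ks"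
  by (auto simp: field_K_def intro: sum_in_Reals prod_in_Reals)

lemmas field_K_closed = field_K_add field_K_diff field_K_mult field_K_divide field_K_inverse
  field_K_uminus field_K_cnj field_K_power field_K_sum field_K_prod

lemma closed_field_K: "field_K Ks \<Longrightarrow> closed Ks"
  by (auto simp: field_K_def closed_complex_Reals)

lemma vec_inD: "vec_in Ks v \<Longrightarrow> v $ i \<in> Ks"
  and mat_inD: "mat_in Ks M \<Longrightarrow> M $ i $ j \<in> Ks"
  by (simp_all add: vec_in_def mat_in_def)

lemma vec_in_vec_lambda: "(\<And>i. f i \<in> Ks) \<Longrightarrow> vec_in Ks (\<chi> i. f i)"
  and vec_in_column: "mat_in Ks M \<Longrightarrow> vec_in Ks (column i M)"
  by (auto simp: vec_in_def mat_in_def column_def)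

lemma vec_in_zero [simp]: "field_K Ks \<Longrightarrow> vec_in Ks 0"
  and vec_in_axis: "field_K Ks \<Longrightarrow> c \<in> Ks \<Longrightarrow> vec_in Ks (axis i c)"
  and vec_in_smult: "field_K Ks \<Longrightarrow> c \<in> Ks \<Longrightarrow> vec_in Ks v \<Longrightarrow> vec_in Ks (c *s v)"
  and vec_in_add: "field_K Ks \<Longrightarrow> vec_in Ks u \<Longrightarrow> vec_in Ks v \<Longrightarrow> vec_in Ks (u + v)"
  and vec_in_diff: "field_K Ks \<Longrightarrow> vec_in Ks u \<Longrightarrow> vec_in Ks v \<Longrightarrow> vec_in Ks (u - v)"
  by (auto simp: vec_in_def axis_def intro!: field_K_closed)

lemma vec_in_matrix_vector_mult:
  "field_K Ks \<Longrightarrow> mat_in Ks M \<Longrightarrow> vec_in Ks v \<Longrightarrow> vec_in Ks (M *v v)"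
  by (auto simp: vec_in_def mat_in_def matrix_vector_mult_def intro!: field_K_sum field_K_mult)

lemma vec_in_vector_matrix_mult:
  "field_K Ks \<Longrightarrow> mat_in Ks M \<Longrightarrow> vec_in Ks v \<Longrightarrow> vec_in Ks (v v* M)"
  by (auto simp: vec_in_def mat_in_def vector_matrix_mult_def intro!: field_K_sum field_K_mult)

lemma vec_in_sum:
  "field_K Ks \<Longrightarrow> (\<And>i. i \<in> S \<Longrightarrow> vec_in Ks (f i)) \<Longrightarrow> vec_in Ks (sum f S)"
  by (auto simp: vec_in_def sum_component intro!: field_K_sum)

definition vcnj :: "complex^'n \<Rightarrow> complex^'n" where
  "vcnj v = (\<chi> i. cnj (v $ i))"

lemma vcnj_nth [simp]: "vcnj v $ i = cnj (v $ i)"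
  by (simp add: vcnj_def)

lemma vcnj_eq_0_iff [simp]: "vcnj v = 0 \<longleftrightarrow> v = 0"
  by (simp add: vec_eq_iff)

lemma norm_vcnj [simp]: "norm (vcnj v) = norm v"
  by (simp add: norm_vec_def)

lemma vec_in_vcnj: "field_K Ks \<Longrightarrow> vec_in Ks v \<Longrightarrow> vec_in Ks (vcnj v)"
  by (auto simp: vec_in_def intro!: field_K_closed)

definition vdot :: "complex^'n \<Rightarrow> complex^'n \<Rightarrow> complex" where
  "vdot u v = (\<Sum>i\<in>UNIV. u $ i * v $ i)"

lemma vdot_commute: "vdot u v = vdot v u"
  by (simp add: vdot_def mult.commute)

lemma vdot_zero_left [simp]: "vdot 0 v = 0"
  and vdot_zero_right [simp]: "vdot u 0 = 0"
  and vdot_add_right: "vdot u (v + w) = vdot u v + vdot u w"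
  and vdot_diff_right: "vdot u (v - w) = vdot u v - vdot u w"
  and vdot_smult_right: "vdot u (c *s v) = c * vdot u v"
  and vdot_smult_left: "vdot (c *s u) v = c * vdot u v"
  by (simp_all add: vdot_def algebra_simps sum.distrib sum_subtractf sum_distrib_left)

lemma vdot_axis_right: "vdot u (axis i 1) = u $ i"
  by (simp add: vdot_def axis_def if_distrib if_distribR cong: if_cong)

lemma vdot_vector_matrix: "vdot (x v* M) y = vdot x (M *v y)"
proof -
  have "vdot (x v* M) y = (\<Sum>i\<in>UNIV. \<Sum>j\<in>UNIV. x $ j * M $ j $ i * y $ i)"
    by (simp add: vdot_def vector_matrix_mult_def sum_distrib_right)
  also have "\<dots> = (\<Sum>j\<in>UNIV. \<Sum>i\<in>UNIV. x $ j * M $ j $ i * y $ i)"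
    by (rule sum.swap)
  also have "\<dots> = vdot x (M *v y)"
    by (simp add: vdot_def matrix_vector_mult_def sum_distrib_left mult.assoc)
  finally show ?thesis .
qed

lemma vdot_in_field_K: "field_K Ks \<Longrightarrow> vec_in Ks u \<Longrightarrow> vec_in Ks v \<Longrightarrow> vdot u v \<in> Ks"
  unfolding vdot_def by (auto intro!: field_K_sum field_K_mult simp: vec_inD)

lemma hinner_eq_vdot: "hinner u v = vdot u (vcnj v)"
  by (simp add: hinner_def vdot_def)

lemma norm_vec_square: "(norm (v::complex^'n))\<^sup>2 = (\<Sum>i\<in>UNIV. (cmod (v $ i))\<^sup>2)"
  by (simp add: norm_vec_def L2_set_def sum_nonneg)

lemma of_real_norm_vec_square: "complex_of_real ((norm (v::complex^'n))\<^sup>2) = vdot (vcnj v) v"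
  unfolding norm_vec_square of_real_sum vdot_def
  by (intro sum.cong refl) (subst complex_norm_square, simp add: mult.commute)

lemma hinner_self: "hinner v v = complex_of_real ((norm v)\<^sup>2)"
  by (simp only: hinner_eq_vdot vdot_commute[of v] of_real_norm_vec_square)

lemma norm_smult_vec: "norm ((c::complex) *s (v::complex^'n)) = cmod c * norm v"
proof -
  have "(norm (c *s v))\<^sup>2 = (cmod c * norm v)\<^sup>2"
    by (simp add: norm_vec_square power_mult_distrib norm_mult sum_distrib_left)
  then show ?thesis by (simp add: power2_eq_iff_nonneg)
qed

lemma norm_axis_1 [simp]: "norm (axis i (1::complex)) = 1"
proof -
  have "(cmod (axis i (1::complex) $ j))\<^sup>2 = (if i = j then 1 else 0)" for j
    by (simp add: axis_def)
  then have "(norm (axis i (1::complex)))\<^sup>2 = 1"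
    by (simp add: norm_vec_square)
  then show ?thesis by (simp add: power2_eq_1_iff)
qed

lemma norm_vdot_le: "cmod (vdot u v) \<le> norm u * norm v"
proof -
  have "cmod (vdot u v) \<le> (\<Sum>i\<in>UNIV. \<bar>cmod (u $ i)\<bar> * \<bar>cmod (v $ i)\<bar>)"
    unfolding vdot_def by (rule order_trans[OF norm_sum]) (simp add: norm_mult)
  also have "\<dots> \<le> L2_set (\<lambda>i. cmod (u $ i)) UNIV * L2_set (\<lambda>i. cmod (v $ i)) UNIV"
    by (rule L2_set_mult_ineq)
  finally show ?thesis by (simp add: norm_vec_def)
qed

lemma sgn_vec_eq_smult: "sgn (x::complex^'n) = complex_of_real (inverse (norm x)) *s x"
  by (simp add: sgn_div_norm vec_eq_iff) (simp add: scaleR_conv_of_real)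

lemma smult_norm_sgn_vec: "complex_of_real (norm x) *s sgn (x::complex^'n) = x"
  by (cases "x = 0") (simp_all add: sgn_vec_eq_smult vector_smult_assoc flip: of_real_mult)

lemma vec_in_sgn: "field_K Ks \<Longrightarrow> vec_in Ks x \<Longrightarrow> vec_in Ks (sgn x)"
  unfolding sgn_vec_eq_smult by (intro vec_in_smult field_K_of_real)

lemma exists_dual_unit_vec:
  fixes u :: "complex^'n"
  assumes K: "field_K Ks" and u: "vec_in Ks u"
  shows "\<exists>\<beta>. vec_in Ks \<beta> \<and> norm \<beta> = 1 \<and> vdot \<beta> u = complex_of_real (norm u)"
proof (cases "u = 0")
  case True
  moreover have "vec_in Ks (axis undefined 1)"
    using K by (intro vec_in_axis) simp_all
  ultimately show ?thesis
    by (intro exI[of _ "axis undefined 1"]) simp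
next
  case False
  have "vdot (sgn (vcnj u)) u = complex_of_real (inverse (norm u)) * complex_of_real ((norm u)\<^sup>2)"
    by (simp only: sgn_vec_eq_smult vdot_smult_left norm_vcnj of_real_norm_vec_square)
  also have "\<dots> = complex_of_real (norm u)"
    using False by (simp add: power2_eq_square)
  finally show ?thesis
    using K u False by (intro exI[of _ "sgn (vcnj u)"]) (simp add: vec_in_sgn vec_in_vcnj norm_sgn)
qed

section \<open>The trilinear form and the spectral norm\<close>

definition trilinear :: "('i::finite,'j::finite,'k::finite) tensor \<Rightarrow> complex^'i \<Rightarrow> complex^'j \<Rightarrow> complex^'k \<Rightarrow> complex"
  where "trilinear M x y z = (\<Sum>i\<in>UNIV. \<Sum>j\<in>UNIV. \<Sum>k\<in>UNIV. M i j k * x $ i * y $ j * z $ k)"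

lemma trilinear_smult:
  "trilinear M (a *s x) y z = a * trilinear M x y z"
  "trilinear M x (a *s y) z = a * trilinear M x y z"
  "trilinear M x y (a *s z) = a * trilinear M x y z"
  by (simp_all add: trilinear_def sum_distrib_left mult_ac)

lemma trilinear_slices: "trilinear X a b c = (\<Sum>l\<in>UNIV. c $ l * vdot a (slice X l *v b))"
proof -
  have "trilinear X a b c = (\<Sum>l\<in>UNIV. \<Sum>i\<in>UNIV. \<Sum>j\<in>UNIV. X i j l * a $ i * b $ j * c $ l)"
    unfolding trilinear_def by (subst sum.swap, intro sum.cong refl) (rule sum.swap)
  also have "\<dots> = (\<Sum>l\<in>UNIV. c $ l * vdot a (slice X l *v b))"
    by (simp add: vdot_def slice_def matrix_vector_mult_def sum_distrib_left mult_ac)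
  finally show ?thesis .
qed

lemma sum_swap_1_3:
  "(\<Sum>a\<in>A. \<Sum>j\<in>B. \<Sum>i\<in>D. f a j i) = (\<Sum>i\<in>D. \<Sum>j\<in>B. \<Sum>a\<in>A. f a j i)"
proof -
  have "(\<Sum>a\<in>A. \<Sum>j\<in>B. \<Sum>i\<in>D. f a j i) = (\<Sum>a\<in>A. \<Sum>i\<in>D. \<Sum>j\<in>B. f a j i)"
    by (intro sum.cong refl) (rule sum.swap)
  also have "\<dots> = (\<Sum>i\<in>D. \<Sum>a\<in>A. \<Sum>j\<in>B. f a j i)"
    by (rule sum.swap)
  also have "\<dots> = (\<Sum>i\<in>D. \<Sum>j\<in>B. \<Sum>a\<in>A. f a j i)"
    by (intro sum.cong refl) (rule sum.swap)
  finally show ?thesis .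
qed

lemma sum_swap_1_4:
  "(\<Sum>a\<in>A. \<Sum>j\<in>B. \<Sum>k\<in>C. \<Sum>i\<in>D. f a j k i) = (\<Sum>i\<in>D. \<Sum>j\<in>B. \<Sum>k\<in>C. \<Sum>a\<in>A. f a j k i)"
proof -
  have "(\<Sum>a\<in>A. \<Sum>j\<in>B. \<Sum>k\<in>C. \<Sum>i\<in>D. f a j k i) = (\<Sum>a\<in>A. \<Sum>j\<in>B. \<Sum>i\<in>D. \<Sum>k\<in>C. f a j k i)"
    by (intro sum.cong refl) (rule sum.swap)
  also have "\<dots> = (\<Sum>a\<in>A. \<Sum>i\<in>D. \<Sum>j\<in>B. \<Sum>k\<in>C. f a j k i)"
    by (intro sum.cong refl) (rule sum.swap)
  also have "\<dots> = (\<Sum>i\<in>D. \<Sum>a\<in>A. \<Sum>j\<in>B. \<Sum>k\<in>C. f a j k i)"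
    by (rule sum.swap)
  also have "\<dots> = (\<Sum>i\<in>D. \<Sum>j\<in>B. \<Sum>a\<in>A. \<Sum>k\<in>C. f a j k i)"
    by (intro sum.cong refl) (rule sum.swap)
  also have "\<dots> = (\<Sum>i\<in>D. \<Sum>j\<in>B. \<Sum>k\<in>C. \<Sum>a\<in>A. f a j k i)"
    by (intro sum.cong refl) (rule sum.swap)
  finally show ?thesis .
qed

lemma trilinear_mode1: "trilinear (mode1 X M) x y z = trilinear X (x v* M) y z"
proof -
  have "trilinear (mode1 X M) x y z
      = (\<Sum>a\<in>UNIV. \<Sum>j\<in>UNIV. \<Sum>k\<in>UNIV. \<Sum>i\<in>UNIV. M $ a $ i * X i j k * x $ a * y $ j * z $ k)"
    unfolding trilinear_def mode1_def by (simp only: sum_distrib_right)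
  also have "\<dots> = (\<Sum>i\<in>UNIV. \<Sum>j\<in>UNIV. \<Sum>k\<in>UNIV. \<Sum>a\<in>UNIV. M $ a $ i * X i j k * x $ a * y $ j * z $ k)"
    by (rule sum_swap_1_4)
  also have "\<dots> = trilinear X (x v* M) y z"
    unfolding trilinear_def vector_matrix_mult_def by (simp only: sum_distrib_left sum_distrib_right vec_lambda_beta) (simp only: mult_ac)
  finally show ?thesis .
qed

lemma trilinear_mode2: "trilinear (mode2 X M) x y z = trilinear X x (y v* M) z"
proof -
  have "trilinear (mode2 X M) x y z
      = (\<Sum>i\<in>UNIV. \<Sum>b\<in>UNIV. \<Sum>k\<in>UNIV. \<Sum>j\<in>UNIV. M $ b $ j * X i j k * x $ i * y $ b * z $ k)"
    unfolding trilinear_def mode2_def by (simp add: sum_distrib_right sum_distrib_left mult_ac)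
  also have "\<dots> = (\<Sum>i\<in>UNIV. \<Sum>j\<in>UNIV. \<Sum>k\<in>UNIV. \<Sum>b\<in>UNIV. M $ b $ j * X i j k * x $ i * y $ b * z $ k)"
    by (intro sum.cong refl) (rule sum_swap_1_3)
  also have "\<dots> = trilinear X x (y v* M) z"
    unfolding trilinear_def vector_matrix_mult_def by (simp only: sum_distrib_left sum_distrib_right vec_lambda_beta) (simp only: mult_ac)
  finally show ?thesis .
qed

lemma trilinear_mode3: "trilinear (mode3 X M) x y z = trilinear X x y (z v* M)"
proof -
  have "trilinear (mode3 X M) x y z
      = (\<Sum>i\<in>UNIV. \<Sum>j\<in>UNIV. \<Sum>c\<in>UNIV. \<Sum>k\<in>UNIV. M $ c $ k * X i j k * x $ i * y $ j * z $ c)"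
    unfolding trilinear_def mode3_def by (simp add: sum_distrib_right sum_distrib_left mult_ac)
  also have "\<dots> = (\<Sum>i\<in>UNIV. \<Sum>j\<in>UNIV. \<Sum>k\<in>UNIV. \<Sum>c\<in>UNIV. M $ c $ k * X i j k * x $ i * y $ j * z $ c)"
    by (intro sum.cong refl) (rule sum.swap)
  also have "\<dots> = trilinear X x y (z v* M)"
    unfolding trilinear_def vector_matrix_mult_def by (simp only: sum_distrib_left sum_distrib_right vec_lambda_beta) (simp only: mult_ac)
  finally show ?thesis .
qed

lemma norm_trilinear_le_sum:
  "cmod (trilinear M x y z)
     \<le> (\<Sum>i\<in>UNIV. \<Sum>j\<in>UNIV. \<Sum>k\<in>UNIV. cmod (M i j k)) * norm x * norm y * norm z"
proof -
  have "cmod (trilinear M x y z) \<le> (\<Sum>i\<in>UNIV. \<Sum>j\<in>UNIV. \<Sum>k\<in>UNIV. cmod (M i j k * x $ i * y $ j * z $ k))"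
    unfolding trilinear_def
    by (rule order_trans[OF norm_sum], rule sum_mono, rule order_trans[OF norm_sum], rule sum_mono, rule norm_sum)
  also have "\<dots> \<le> (\<Sum>i\<in>UNIV. \<Sum>j\<in>UNIV. \<Sum>k\<in>UNIV. cmod (M i j k) * norm x * norm y * norm z)"
    unfolding norm_mult
    by (intro sum_mono mult_mono mult_left_mono Finite_Cartesian_Product.norm_nth_le) auto
  finally show ?thesis by (simp add: sum_distrib_right)
qed

lemma sp_norm_trilinear: "sp_norm Ks M = Sup {cmod (trilinear M x y z) | x y z.
    vec_in Ks x \<and> vec_in Ks y \<and> vec_in Ks z \<and> norm x = 1 \<and> norm y = 1 \<and> norm z = 1}"
  by (simp add: sp_norm_def trilinear_def)

lemma bdd_above_trilinear_units: "bdd_above {cmod (trilinear M x y z) | x y z.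
    vec_in Ks x \<and> vec_in Ks y \<and> vec_in Ks z \<and> norm x = 1 \<and> norm y = 1 \<and> norm z = 1}"
proof (rule bdd_aboveI)
  fix t assume "t \<in> {cmod (trilinear M x y z) | x y z.
    vec_in Ks x \<and> vec_in Ks y \<and> vec_in Ks z \<and> norm x = 1 \<and> norm y = 1 \<and> norm z = 1}"
  then obtain x y z where "t = cmod (trilinear M x y z)" "norm x = 1" "norm y = 1" "norm z = 1"
    by blast
  then show "t \<le> (\<Sum>i\<in>UNIV. \<Sum>j\<in>UNIV. \<Sum>k\<in>UNIV. cmod (M i j k))"
    using norm_trilinear_le_sum[of M x y z] by simp
qed

lemma sp_norm_ge:
  "vec_in Ks x \<Longrightarrow> vec_in Ks y \<Longrightarrow> vec_in Ks z \<Longrightarrow> norm x = 1 \<Longrightarrow> norm y = 1 \<Longrightarrow> norm z = 1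
    \<Longrightarrow> cmod (trilinear M x y z) \<le> sp_norm Ks M"
  unfolding sp_norm_trilinear by (rule cSup_upper[OF _ bdd_above_trilinear_units]) blast

lemma sp_norm_le:
  fixes M :: "('i::finite,'j::finite,'k::finite) tensor"
  assumes K: "field_K Ks"
    and bound: "\<And>x y z. vec_in Ks x \<Longrightarrow> vec_in Ks y \<Longrightarrow> vec_in Ks z \<Longrightarrow>
      norm x = 1 \<Longrightarrow> norm y = 1 \<Longrightarrow> norm z = 1 \<Longrightarrow> cmod (trilinear M x y z) \<le> c"
  shows "sp_norm Ks M \<le> c"
  unfolding sp_norm_trilinear
proof (rule cSup_least)
  let ?x = "axis undefined 1 :: complex^'i"
  let ?y = "axis undefined 1 :: complex^'j"
  let ?z = "axis undefined 1 :: complex^'k"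
  have "vec_in Ks ?x" "vec_in Ks ?y" "vec_in Ks ?z" "norm ?x = 1" "norm ?y = 1" "norm ?z = 1"
    using K by (simp_all add: vec_in_axis)
  then show "{cmod (trilinear M x y z) | x y z. vec_in Ks x \<and> vec_in Ks y \<and> vec_in Ks z \<and>
      norm x = 1 \<and> norm y = 1 \<and> norm z = 1} \<noteq> {}"
    by blast
next
  fix t assume "t \<in> {cmod (trilinear M x y z) | x y z. vec_in Ks x \<and> vec_in Ks y \<and> vec_in Ks z \<and>
      norm x = 1 \<and> norm y = 1 \<and> norm z = 1}"
  then obtain x y z where "t = cmod (trilinear M x y z)" "vec_in Ks x" "vec_in Ks y" "vec_in Ks z"
    "norm x = 1" "norm y = 1" "norm z = 1"
    by blast
  then show "t \<le> c" using bound by simp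
qed

lemma sp_norm_nonneg:
  fixes M :: "('i::finite,'j::finite,'k::finite) tensor"
  assumes K: "field_K Ks"
  shows "0 \<le> sp_norm Ks M"
proof -
  have "vec_in Ks (axis undefined 1 :: complex^'i)" "vec_in Ks (axis undefined 1 :: complex^'j)"
    "vec_in Ks (axis undefined 1 :: complex^'k)"
    using K by (simp_all add: vec_in_axis)
  then have "cmod (trilinear M (axis undefined 1) (axis undefined 1) (axis undefined 1)) \<le> sp_norm Ks M"
    by (intro sp_norm_ge) simp_all
  then show ?thesis by (rule order_trans[OF norm_ge_zero])
qed

lemma norm_trilinear_le_sp_norm:
  assumes K: "field_K Ks" and xyz: "vec_in Ks x" "vec_in Ks y" "vec_in Ks z"
  shows "cmod (trilinear M x y z) \<le> sp_norm Ks M * norm x * norm y * norm z"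
proof -
  have "trilinear M x y z = trilinear M (complex_of_real (norm x) *s sgn x)
      (complex_of_real (norm y) *s sgn y) (complex_of_real (norm z) *s sgn z)"
    by (simp only: smult_norm_sgn_vec)
  then have "cmod (trilinear M x y z) = norm x * norm y * norm z * cmod (trilinear M (sgn x) (sgn y) (sgn z))"
    by (simp add: trilinear_smult norm_mult)
  also have "\<dots> \<le> norm x * norm y * norm z * sp_norm Ks M"
  proof (cases "x = 0 \<or> y = 0 \<or> z = 0")
    case False
    then show ?thesis using K xyz by (intro mult_left_mono sp_norm_ge) (simp_all add: norm_sgn vec_in_sgn)
  qed (elim disjE, simp_all)
  finally show ?thesis by (simp add: mult_ac)
qed

lemma sp_norm_modes_le:
  fixes X :: "('i::finite,'j::finite,'k::finite) tensor"
    and M1 :: "complex^'i^'a::finite" and M2 :: "complex^'j^'b::finite" and M3 :: "complex^'k^'c::finite"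
  assumes K: "field_K Ks" and M: "mat_in Ks M1" "mat_in Ks M2" "mat_in Ks M3"
    and c: "c1 \<ge> 0" "c2 \<ge> 0" "c3 \<ge> 0"
    and bound: "\<And>u. norm (u v* M1) \<le> c1 * norm u" "\<And>u. norm (u v* M2) \<le> c2 * norm u"
      "\<And>u. norm (u v* M3) \<le> c3 * norm u"
  shows "sp_norm Ks (mode3 (mode2 (mode1 X M1) M2) M3) \<le> sp_norm Ks X * c1 * c2 * c3"
proof (rule sp_norm_le[OF K])
  fix x :: "complex^'a" and y :: "complex^'b" and z :: "complex^'c"
  assume xyz: "vec_in Ks x" "vec_in Ks y" "vec_in Ks z" "norm x = 1" "norm y = 1" "norm z = 1"
  have "cmod (trilinear (mode3 (mode2 (mode1 X M1) M2) M3) x y z)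
      = cmod (trilinear X (x v* M1) (y v* M2) (z v* M3))"
    by (simp only: trilinear_mode1 trilinear_mode2 trilinear_mode3)
  also have "\<dots> \<le> sp_norm Ks X * norm (x v* M1) * norm (y v* M2) * norm (z v* M3)"
    using K M xyz by (auto intro!: norm_trilinear_le_sp_norm vec_in_vector_matrix_mult)
  also have "\<dots> \<le> sp_norm Ks X * c1 * c2 * c3"
    using bound(1)[of x] bound(2)[of y] bound(3)[of z] xyz sp_norm_nonneg[OF K, of X] c
    by (auto intro!: mult_mono mult_nonneg_nonneg)
  finally show "cmod (trilinear (mode3 (mode2 (mode1 X M1) M2) M3) x y z) \<le> sp_norm Ks X * c1 * c2 * c3" .
qed

lemma mode1_mat_1 [simp]: "mode1 X (mat 1) = X"
  and mode2_mat_1 [simp]: "mode2 X (mat 1) = X"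
  and mode3_mat_1 [simp]: "mode3 X (mat 1) = X"
  by (simp_all add: mode1_def mode2_def mode3_def mat_def if_distrib if_distribR cong: if_cong)

lemma mat_in_mat_1: "field_K Ks \<Longrightarrow> mat_in Ks (mat 1)"
  by (auto simp: mat_in_def mat_def)

section \<open>Inverse matrices and the smallest singular value\<close>

lemma matrix_inv_right: "invertible A \<Longrightarrow> A ** matrix_inv A = mat 1"
  and matrix_inv_left: "invertible A \<Longrightarrow> matrix_inv A ** A = mat 1"
  unfolding invertible_def matrix_inv_def by (metis (mono_tags, lifting) someI_ex)+

lemma matrix_inv_cancel:
  assumes "invertible A"
  shows "A *v (matrix_inv A *v x) = x" "matrix_inv A *v (A *v x) = x"
    "(x v* A) v* matrix_inv A = x" "(x v* matrix_inv A) v* A = x"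
  by (simp_all add: matrix_vector_mul_assoc vector_matrix_mul_assoc
      matrix_inv_right[OF assms] matrix_inv_left[OF assms])

lemma vector_matrix_eq_0_iff:
  fixes A :: "complex^'n^'n"
  assumes "invertible A"
  shows "x v* A = 0 \<longleftrightarrow> x = 0"
proof
  assume "x v* A = 0"
  then have "(x v* A) v* matrix_inv A = 0" by simp
  then show "x = 0" by (simp only: matrix_inv_cancel(3)[OF assms])
qed simp

lemma matrix_vector_mult_axis: "(M *v axis j 1) $ i = M $ i $ j"
  by (simp add: matrix_vector_mult_def axis_def if_distrib cong: if_cong)

lemma mat_in_matrix_inv:
  fixes A :: "complex^'n^'n"
  assumes K: "field_K Ks" and A: "mat_in Ks A" "invertible A"
  shows "mat_in Ks (matrix_inv A)"
  unfolding mat_in_def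
proof (intro allI)
  fix i j
  have det_in: "det M \<in> Ks" if "mat_in Ks M" for M :: "complex^'n^'n"
    unfolding det_def using K that by (auto intro!: field_K_sum field_K_mult field_K_prod simp: mat_inD)
  have "A *v (matrix_inv A *v axis j 1) = axis j 1"
    by (rule matrix_inv_cancel(1)[OF A(2)])
  then have "matrix_inv A *v axis j 1 = (\<chi> k. det (\<chi> i l. if l = k then axis j 1 $ i else A $ i $ l) / det A)"
    using cramer[of A] A(2) invertible_det_nz by blast
  then have "(matrix_inv A *v axis j 1) $ i = det (\<chi> i' l. if l = i then axis j 1 $ i' else A $ i' $ l) / det A"
    by simp
  then have "matrix_inv A $ i $ j = det (\<chi> i' l. if l = i then axis j 1 $ i' else A $ i' $ l) / det A"
    by (simp only: matrix_vector_mult_axis)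
  also have "\<dots> \<in> Ks"
    using K A by (intro field_K_divide det_in) (auto simp: mat_in_def axis_def)
  finally show "matrix_inv A $ i $ j \<in> Ks" .
qed

lemma sigma_min_le: "norm x = 1 \<Longrightarrow> sigma_min A \<le> norm (A *v x)"
  unfolding sigma_min_def by (rule cInf_lower) (auto intro: bdd_belowI[of _ 0])

lemma sigma_min_pos:
  fixes A :: "complex^'n^'n"
  assumes A: "invertible A"
  shows "0 < sigma_min A"
proof -
  obtain c where c: "0 < c" "\<And>x. norm (matrix_inv A *v x) \<le> norm x * c"
    using bounded_linear.pos_bounded[OF matrix_vector_mul_bounded_linear[of "matrix_inv A"]] by blast
  have lower: "1 / c \<le> norm (A *v x)" if "norm x = 1" for x
  proof -
    have "1 \<le> norm (A *v x) * c"
      using c(2)[of "A *v x"] that by (simp add: matrix_inv_cancel(2)[OF A])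
    then show ?thesis using c(1) by (simp add: divide_le_eq)
  qed
  have "{norm (A *v x) | x. norm x = 1} \<noteq> {}"
    using norm_axis_1 by blast
  then have "1 / c \<le> sigma_min A"
    unfolding sigma_min_def by (rule cInf_greatest) (use lower in blast)
  moreover have "0 < 1 / c" using c(1) by simp
  ultimately show ?thesis by linarith
qed

lemma sigma_min_mult_norm_le: "sigma_min A * norm x \<le> norm (A *v x)"
proof (cases "x = 0")
  case False
  have "A *v x = complex_of_real (norm x) *s (A *v sgn x)"
    by (subst smult_norm_sgn_vec[of x, symmetric]) (simp only: vector_scalar_commute)
  then have "norm (A *v x) = norm x * norm (A *v sgn x)"
    by (simp add: norm_smult_vec)
  moreover have "sigma_min A \<le> norm (A *v sgn x)"
    using False by (intro sigma_min_le) (simp add: norm_sgn)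
  ultimately show ?thesis
    using mult_right_mono[of "sigma_min A" "norm (A *v sgn x)" "norm x"] by (simp add: mult.commute)
qed simp

lemma norm_matrix_inv_le:
  assumes A: "invertible A"
  shows "norm (matrix_inv A *v u) \<le> norm u / sigma_min A"
  using sigma_min_mult_norm_le[of A "matrix_inv A *v u"] sigma_min_pos[OF A]
  by (simp add: matrix_inv_cancel(1)[OF A] le_divide_eq mult.commute)

lemma norm_vector_matrix_le:
  assumes bound: "\<And>v. norm (N *v v) \<le> c * norm v"
  shows "norm (u v* N) \<le> c * norm (u::complex^'n)"
proof -
  define t where "t = u v* N"
  have c: "0 \<le> c"
    using bound[of "axis undefined 1"] by (simp add: order_trans[OF norm_ge_zero])
  have "(norm t)\<^sup>2 = cmod (vdot (vcnj t) t)"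
    by (simp only: of_real_norm_vec_square[symmetric] norm_of_real) simp
  also have "vdot (vcnj t) t = vdot u (N *v vcnj t)"
    by (simp add: t_def vdot_commute[of "vcnj _"] vdot_vector_matrix)
  also have "cmod \<dots> \<le> norm u * norm (N *v vcnj t)"
    by (rule norm_vdot_le)
  also have "\<dots> \<le> norm u * (c * norm t)"
    using bound[of "vcnj t"] by (simp add: mult_left_mono)
  finally have "norm t * norm t \<le> norm t * (c * norm u)"
    by (simp add: power2_eq_square mult_ac)
  then show ?thesis
    unfolding t_def[symmetric] using c by (cases "norm t = 0") auto
qed

lemma norm_vector_matrix_inv_le:
  assumes A: "invertible A"
  shows "norm (u v* matrix_inv A) \<le> norm u / sigma_min A"
  using norm_vector_matrix_le[of "matrix_inv A" "1 / sigma_min A" u] norm_matrix_inv_le[OF A] by simp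

lemma sp_norm_inverse_modes_le:
  fixes A :: "complex^'i::finite^'i" and B :: "complex^'j::finite^'j" and E :: "('i,'j,'k::finite) tensor"
  assumes K: "field_K Ks" and A: "mat_in Ks A" "invertible A" and B: "mat_in Ks B" "invertible B"
  shows "sp_norm Ks (mode2 (mode1 E (matrix_inv A)) (matrix_inv B)) \<le> sp_norm Ks E / (sigma_min A * sigma_min B)"
proof -
  have "sp_norm Ks (mode3 (mode2 (mode1 E (matrix_inv A)) (matrix_inv B)) (mat 1))
      \<le> sp_norm Ks E * (1 / sigma_min A) * (1 / sigma_min B) * 1"
    using sigma_min_pos[OF A(2)] sigma_min_pos[OF B(2)] norm_vector_matrix_inv_le[OF A(2)]
      norm_vector_matrix_inv_le[OF B(2)]
    by (intro sp_norm_modes_le K mat_in_matrix_inv mat_in_mat_1 A B) auto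
  then show ?thesis by simp
qed

section \<open>Lines, orthogonal projections and the chordal metric\<close>

lemma kspan_smult:
  assumes K: "field_K Ks" and t: "t \<in> Ks" "t \<noteq> 0"
  shows "kspan Ks (t *s u) = kspan Ks u"
proof -
  have "c *s (t *s u) = (c * t) *s u" "c *s u = (c / t) *s (t *s u)" for c
    using t by (simp_all add: vector_smult_assoc)
  moreover have "c * t \<in> Ks" "c / t \<in> Ks" if "c \<in> Ks" for c
    using K t that by (auto intro!: field_K_closed)
  ultimately show ?thesis
    unfolding kspan_def by blast
qed

lemma line_rep_kspan:
  assumes K: "field_K Ks" and u: "u \<noteq> 0"
  obtains t where "t \<in> Ks" "t \<noteq> 0" "line_rep Ks (kspan Ks u) = t *s u"
proof -
  define v where "v = line_rep Ks (kspan Ks u)"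
  have v: "v \<noteq> 0 \<and> kspan Ks u = kspan Ks v"
    unfolding v_def line_rep_def by (rule someI[of _ u]) (use u in simp)
  moreover have "v \<in> kspan Ks v"
    unfolding kspan_def using K by (auto intro!: exI[of _ 1])
  ultimately have "v \<in> kspan Ks u" by simp
  then obtain t where t: "t \<in> Ks" "v = t *s u"
    by (auto simp: kspan_def)
  moreover have "t \<noteq> 0" using t(2) v by (intro notI) simp
  ultimately show ?thesis using that unfolding v_def by blast
qed

definition rejection :: "complex^'n \<Rightarrow> complex^'n \<Rightarrow> complex^'n" where
  "rejection w c = c - (hinner c w / complex_of_real ((norm w)\<^sup>2)) *s w"

lemma sum_delta_diff:
  "(\<Sum>j\<in>UNIV. ((if i = j then 1 else 0) - f j) * (g j::complex)) = g (i::'n::finite) - (\<Sum>j\<in>UNIV. f j * g j)"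
proof -
  have "(\<Sum>j\<in>UNIV. (if i = j then 1 else 0) * g j) = (\<Sum>j\<in>UNIV. if i = j then g j else 0)"
    by (rule sum.cong) auto
  then show ?thesis by (simp add: left_diff_distrib sum_subtractf)
qed

lemma sum_scaled_rearrange:
  "(\<Sum>j\<in>UNIV. (a * b j / n) * (d j::complex)) = (\<Sum>j\<in>UNIV. d j * b j) / n * a"
proof -
  have "(\<Sum>j\<in>UNIV. d j * b j) / n * a = (\<Sum>j\<in>UNIV. d j * b j / n * a)"
    by (simp only: sum_divide_distrib sum_distrib_right)
  also have "\<dots> = (\<Sum>j\<in>UNIV. (a * b j / n) * d j)"
    by (rule sum.cong) (auto simp: field_simps)
  finally show ?thesis by simp
qed

lemma proj_perp_apply: "proj_perp Ks L *v c = rejection (line_rep Ks L) c"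
proof -
  define w where "w = line_rep Ks L"
  define n where "n = complex_of_real ((norm w)\<^sup>2)"
  have "(proj_perp Ks L *v c) $ i = rejection w c $ i" for i
  proof -
    have "(proj_perp Ks L *v c) $ i = (\<Sum>j\<in>UNIV. ((if i = j then 1 else 0) - w $ i * cnj (w $ j) / n) * c $ j)"
      by (simp only: proj_perp_def Let_def w_def n_def matrix_vector_mult_def vec_lambda_beta)
    also have "\<dots> = c $ i - (\<Sum>j\<in>UNIV. c $ j * cnj (w $ j)) / n * w $ i"
      by (simp only: sum_delta_diff sum_scaled_rearrange)
    also have "\<dots> = rejection w c $ i"
      by (simp add: rejection_def hinner_def n_def)
    finally show ?thesis .
  qed
  then show ?thesis by (simp add: vec_eq_iff w_def)
qed

lemma vector_matrix_proj_perp: "c v* proj_perp Ks L = rejection (vcnj (line_rep Ks L)) c"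
proof -
  define w where "w = line_rep Ks L"
  define n where "n = complex_of_real ((norm w)\<^sup>2)"
  have "(c v* proj_perp Ks L) $ i = rejection (vcnj w) c $ i" for i
  proof -
    have "(c v* proj_perp Ks L) $ i = (\<Sum>j\<in>UNIV. ((if i = j then 1 else 0) - cnj (w $ i) * w $ j / n) * c $ j)"
      unfolding proj_perp_def Let_def w_def[symmetric] n_def[symmetric] vector_matrix_mult_def
      by (simp only: vec_lambda_beta) (rule sum.cong, auto simp: mult.commute)
    also have "\<dots> = c $ i - (\<Sum>j\<in>UNIV. c $ j * w $ j) / n * cnj (w $ i)"
      by (simp only: sum_delta_diff sum_scaled_rearrange)
    also have "\<dots> = rejection (vcnj w) c $ i"
      by (simp add: rejection_def hinner_def n_def)
    finally show ?thesis .
  qed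
  then show ?thesis by (simp add: vec_eq_iff w_def)
qed

lemma hinner_diff_left: "hinner (u - v) w = hinner u w - hinner v w"
  and hinner_diff_right: "hinner u (v - w) = hinner u v - hinner u w"
  and hinner_smult_left: "hinner (a *s u) v = a * hinner u v"
  and hinner_smult_right: "hinner u (a *s v) = cnj a * hinner u v"
  and hinner_commute: "hinner v u = cnj (hinner u v)"
  by (simp_all add: hinner_def sum_subtractf sum_distrib_left algebra_simps)

lemma norm_rejection_square:
  assumes w: "w \<noteq> 0"
  shows "(norm (rejection w c))\<^sup>2 = (norm c)\<^sup>2 - (cmod (hinner c w))\<^sup>2 / (norm w)\<^sup>2"
proof -
  define n where "n = (norm w)\<^sup>2"
  define h where "h = hinner c w"
  have n0: "n \<noteq> 0" using w by (simp add: n_def)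
  have hw: "hinner w w = complex_of_real n" by (simp add: n_def hinner_self)
  have hh: "h * cnj h = complex_of_real ((cmod h)\<^sup>2)" by (rule complex_norm_square[symmetric])
  have "complex_of_real ((norm (rejection w c))\<^sup>2) = hinner (rejection w c) (rejection w c)"
    by (simp add: hinner_self)
  also have "\<dots> = hinner c c - cnj (h / complex_of_real n) * h - (h / complex_of_real n) * cnj h
      + (h / complex_of_real n) * cnj (h / complex_of_real n) * hinner w w"
    by (simp add: rejection_def n_def hinner_diff_left hinner_diff_right hinner_smult_left
        hinner_smult_right hinner_commute[of w c] h_def algebra_simps)
  also have "\<dots> = complex_of_real ((norm c)\<^sup>2) - h * cnj h / complex_of_real n"
    unfolding hw hinner_self using n0 by (simp add: n_def field_simps power2_eq_square)
  also have "\<dots> = complex_of_real ((norm c)\<^sup>2 - (cmod h)\<^sup>2 / n)"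
    unfolding hh by simp
  finally show ?thesis unfolding n_def h_def of_real_eq_iff .
qed

lemma norm_rejection_le: "norm (rejection w c) \<le> norm c"
proof (cases "w = 0")
  case False
  then have "(norm (rejection w c))\<^sup>2 \<le> (norm c)\<^sup>2"
    by (simp add: norm_rejection_square)
  then show ?thesis by (simp add: power2_le_iff_abs_le)
qed (simp add: rejection_def)

lemma rejection_smult_self: "w \<noteq> 0 \<Longrightarrow> rejection w (a *s w) = 0"
  by (simp add: rejection_def hinner_smult_left hinner_self vector_smult_assoc)

lemma proj_perp_kspan_smult:
  assumes K: "field_K Ks" and lam: "lam \<noteq> 0"
  shows "proj_perp Ks (kspan Ks lam) *v (a *s lam) = 0"
proof -
  obtain t where t: "t \<noteq> 0" "line_rep Ks (kspan Ks lam) = t *s lam"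
    using line_rep_kspan[OF K lam] by metis
  have "proj_perp Ks (kspan Ks lam) *v (a *s lam) = rejection (t *s lam) ((a / t) *s (t *s lam))"
    using t by (simp add: proj_perp_apply vector_smult_assoc)
  also have "\<dots> = 0"
    using t lam by (intro rejection_smult_self) simp
  finally show ?thesis .
qed

lemma proj_perp_kspan_self: "field_K Ks \<Longrightarrow> lam \<noteq> 0 \<Longrightarrow> proj_perp Ks (kspan Ks lam) *v lam = 0"
  using proj_perp_kspan_smult[of Ks lam 1] by simp

lemma mat_in_proj_perp:
  assumes K: "field_K Ks" and lam: "lam \<noteq> 0" "vec_in Ks lam"
  shows "mat_in Ks (proj_perp Ks (kspan Ks lam))"
proof -
  obtain t where "t \<in> Ks" "line_rep Ks (kspan Ks lam) = t *s lam"
    using line_rep_kspan[OF K lam(1)] by metis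
  then have "vec_in Ks (line_rep Ks (kspan Ks lam))"
    using K lam by (simp add: vec_in_smult)
  then show ?thesis
    unfolding proj_perp_def Let_def mat_in_def
    using K by (auto intro!: field_K_closed simp: vec_inD)
qed

lemma sp_norm_mode3_proj_perp_le:
  assumes K: "field_K Ks" and lam: "lam \<noteq> 0" "vec_in Ks lam"
  shows "sp_norm Ks (mode3 X (proj_perp Ks (kspan Ks lam))) \<le> sp_norm Ks X"
  using sp_norm_modes_le[OF K mat_in_mat_1[OF K] mat_in_mat_1[OF K] mat_in_proj_perp[OF K lam],
      of 1 1 1 X]
  by (simp add: vector_matrix_proj_perp norm_rejection_le)

lemma chordal_vec_smult:
  assumes "s \<noteq> 0" "t \<noteq> 0"
  shows "chordal_vec (s *s u) (t *s v) = chordal_vec u v"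
proof -
  have "(cmod (hinner (s *s u) (t *s v)))\<^sup>2 / ((norm (s *s u))\<^sup>2 * (norm (t *s v))\<^sup>2)
      = ((cmod s)\<^sup>2 * (cmod t)\<^sup>2 * (cmod (hinner u v))\<^sup>2) / (((cmod s)\<^sup>2 * (cmod t)\<^sup>2) * ((norm u)\<^sup>2 * (norm v)\<^sup>2))"
    by (simp add: hinner_smult_left hinner_smult_right norm_smult_vec norm_mult power_mult_distrib mult_ac)
  also have "\<dots> = (cmod (hinner u v))\<^sup>2 / ((norm u)\<^sup>2 * (norm v)\<^sup>2)"
    using assms by simp
  finally show ?thesis by (simp add: chordal_vec_def)
qed

lemma chordal_eq_norm_proj_perp:
  assumes K: "field_K Ks" and c: "norm c = 1" and lam: "lam \<noteq> 0"
  shows "chordal Ks (kspan Ks c) (kspan Ks lam) = norm (proj_perp Ks (kspan Ks lam) *v c)"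
proof -
  have c0: "c \<noteq> 0" using c by auto
  obtain s where s: "s \<noteq> 0" "line_rep Ks (kspan Ks c) = s *s c"
    using line_rep_kspan[OF K c0] by metis
  obtain t where t: "t \<noteq> 0" "line_rep Ks (kspan Ks lam) = t *s lam"
    using line_rep_kspan[OF K lam] by metis
  define w where "w = line_rep Ks (kspan Ks lam)"
  have w: "w \<noteq> 0" using t lam by (simp add: w_def)
  have "chordal Ks (kspan Ks c) (kspan Ks lam) = chordal_vec (s *s c) (1 *s w)"
    by (simp add: chordal_def s w_def)
  also have "\<dots> = chordal_vec c w"
    using s by (intro chordal_vec_smult) simp_all
  also have "\<dots> = sqrt ((norm (rejection w c))\<^sup>2)"
    unfolding chordal_vec_def norm_rejection_square[OF w] c by simp
  also have "\<dots> = norm (rejection w c)"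
    by simp
  finally show ?thesis by (simp add: proj_perp_apply w_def)
qed

lemma Min_chordal_columns_eq:
  fixes C :: "complex^'r::finite^'k::finite"
  assumes K: "field_K Ks" and C: "\<forall>r. norm (column r C) = 1" and lam: "lam \<noteq> 0"
  shows "Min (range (\<lambda>k. chordal Ks (kspan Ks (column k C)) (kspan Ks lam)))
       = Min (range (\<lambda>r. norm (proj_perp Ks (kspan Ks lam) *v column r C)))"
  using chordal_eq_norm_proj_perp[OF K _ lam] C by simp

lemma vec_eq_card_2:
  assumes "UNIV = {k1, k2}" and "x $ k1 = y $ k1" and "x $ k2 = y $ k2"
  shows "x = y"
proof (rule iffD2[OF vec_eq_iff], rule allI)
  fix k
  have "k \<in> {k1, k2}"
    by (simp only: assms(1)[symmetric] UNIV_I)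
  then show "x $ k = y $ k"
    using assms(2,3) by auto
qed

lemma rejection_plane:
  fixes w :: "complex^'k::finite"
  assumes k12: "UNIV = {k1, k2}" "k1 \<noteq> k2" and w: "w \<noteq> 0"
  defines "v \<equiv> \<chi> k. if k = k1 then - cnj (w $ k2) / complex_of_real (norm w)
                        else cnj (w $ k1) / complex_of_real (norm w)"
  shows "norm v = 1" and "rejection w c = hinner c v *s v"
proof -
  have sum2: "(\<Sum>k\<in>UNIV. f k) = f k1 + f k2" for f :: "'k \<Rightarrow> complex"
    by (simp add: k12)
  define nw where "nw = complex_of_real (norm w)"
  define n where "n = w $ k1 * cnj (w $ k1) + w $ k2 * cnj (w $ k2)"
  have nw: "nw \<noteq> 0" "cnj nw = nw" using w by (simp_all add: nw_def)
  have norm_w: "complex_of_real ((norm w)\<^sup>2) = n"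
    by (simp only: of_real_norm_vec_square) (simp add: vdot_def sum2 n_def mult.commute)
  then have nw_square: "nw * nw = n"
    by (simp add: nw_def power2_eq_square)
  have n0: "n \<noteq> 0" using nw(1) nw_square by auto
  have v: "v $ k1 = - cnj (w $ k2) / nw" "v $ k2 = cnj (w $ k1) / nw"
    using k12 by (simp_all add: v_def nw_def)
  have "vdot (vcnj v) v = cnj (v $ k1) * v $ k1 + cnj (v $ k2) * v $ k2"
    by (simp add: vdot_def sum2)
  also have "\<dots> = n / (nw * nw)"
    using nw by (simp add: v n_def field_simps)
  finally have "complex_of_real ((norm v)\<^sup>2) = 1"
    using n0 nw_square by (simp only: of_real_norm_vec_square) simp
  then have "(norm v)\<^sup>2 = 1"
    by (simp only: of_real_eq_1_iff)
  then show "norm v = 1"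
    using norm_ge_zero[of v] by (auto simp: power2_eq_1_iff)
  have hv: "hinner c v = (c $ k2 * w $ k1 - c $ k1 * w $ k2) / nw"
    by (simp add: hinner_def sum2 v nw(2) diff_divide_distrib)
  have rej: "rejection w c = c - ((c $ k1 * cnj (w $ k1) + c $ k2 * cnj (w $ k2)) / n) *s w"
    by (simp only: rejection_def norm_w) (simp add: hinner_def sum2)
  have components: "rejection w c $ k1 = (hinner c v *s v) $ k1" "rejection w c $ k2 = (hinner c v *s v) $ k2"
    using k12(2) nw n0 nw_square n_def unfolding rej hv
    by (simp_all add: v divide_simps, simp_all add: algebra_simps)
  show "rejection w c = hinner c v *s v"
    using vec_eq_card_2[OF k12(1) components] .
qed

lemma proj_perp_card_2:
  fixes lam :: "complex^'k::finite"
  assumes card: "CARD('k) = 2" and K: "field_K Ks" and lam: "lam \<noteq> 0" "vec_in Ks lam"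
  obtains v where "vec_in Ks v" "norm v = 1" "\<And>c. proj_perp Ks (kspan Ks lam) *v c = hinner c v *s v"
proof -
  obtain k1 k2 :: 'k where k12: "UNIV = {k1, k2}" "k1 \<noteq> k2"
    using card card_2_iff[of "UNIV :: 'k set"] by blast
  obtain t where t: "t \<in> Ks" "t \<noteq> 0" "line_rep Ks (kspan Ks lam) = t *s lam"
    using line_rep_kspan[OF K lam(1)] by metis
  define w where "w = line_rep Ks (kspan Ks lam)"
  have w: "w \<noteq> 0" "vec_in Ks w" using t lam K by (auto simp: w_def vec_in_smult)
  define v :: "complex^'k" where "v = (\<chi> k. if k = k1 then - cnj (w $ k2) / complex_of_real (norm w)
    else cnj (w $ k1) / complex_of_real (norm w))"
  have "vec_in Ks v"
    unfolding v_def using K w by (auto intro!: vec_in_vec_lambda field_K_closed simp: vec_inD)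
  then show ?thesis
    using that rejection_plane[OF k12 w(1)] by (simp add: proj_perp_apply w_def v_def)
qed

section \<open>Slices and the spectrum of a polyadic decomposition\<close>

lemma slice_cpd_mult: "slice (cpd A B C) l *v x = A *v (\<chi> r. C $ l $ r * (x v* B) $ r)"
  by (simp add: slice_def cpd_def matrix_vector_mult_def vector_matrix_mult_def vec_eq_iff
      sum_distrib_left sum_distrib_right mult_ac) (intro allI sum.swap)

lemma slice_comb_mult: "slice_comb X \<gamma> *v x = (\<Sum>l\<in>UNIV. \<gamma> $ l *s (slice X l *v x))"
  by (simp add: slice_comb_def slice_def matrix_vector_mult_def vec_eq_iff sum_component
      sum_distrib_left sum_distrib_right mult_ac) (intro allI sum.swap)

lemma slices_annihilate_imp_zero:
  assumes det: "det (slice_comb X \<gamma>) \<noteq> 0" and zero: "\<And>l. slice X l *v x = 0"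
  shows "x = 0"
proof -
  have "slice_comb X \<gamma> *v x = slice_comb X \<gamma> *v 0"
    by (simp add: slice_comb_mult zero)
  moreover have "invertible (slice_comb X \<gamma>)"
    using det by (simp add: invertible_det_nz)
  ultimately show ?thesis
    using injD[OF inj_matrix_vector_mult] by blast
qed

lemma slice_comb_cpd:
  "slice_comb (cpd A B C) \<gamma> = A ** (\<chi> i j. if i = j then vdot (column i C) \<gamma> else 0) ** transpose B"
proof -
  define D where "D = (\<chi> i j. if i = j then vdot (column i C) \<gamma> else 0)"
  have "(A ** D) $ i $ r = A $ i $ r * vdot (column r C) \<gamma>" for i r
    by (simp add: D_def matrix_matrix_mult_def if_distrib if_distribR cong: if_cong)
  then have "(A ** D ** transpose B) $ i $ j = (\<Sum>r\<in>UNIV. \<Sum>k\<in>UNIV. \<gamma> $ k * (A $ i $ r * B $ j $ r * C $ k $ r))"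
    for i j
    by (simp add: matrix_matrix_mult_def transpose_def vdot_def column_def sum_distrib_left
        sum_distrib_right mult_ac)
  moreover have "(\<Sum>r\<in>UNIV. \<Sum>k\<in>UNIV. \<gamma> $ k * (A $ i $ r * B $ j $ r * C $ k $ r))
      = slice_comb (cpd A B C) \<gamma> $ i $ j" for i j
    by (subst sum.swap) (simp add: slice_comb_def cpd_def sum_distrib_left)
  ultimately show ?thesis by (simp add: vec_eq_iff D_def)
qed

lemma det_slice_comb_cpd:
  fixes A B :: "complex^'r::finite^'r"
  shows "det (slice_comb (cpd A B C) \<gamma>) = det A * det B * (\<Prod>r\<in>UNIV. vdot (column r C) \<gamma>)"
  by (simp add: slice_comb_cpd det_mul det_diagonal)

lemma slice_mix_invertible_cpd_imp_invertible:
  fixes A B :: "complex^'r::finite^'r"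
  assumes "slice_mix_invertible Ks (cpd A B C)"
  shows "invertible A" "invertible B"
  using assms by (auto simp: slice_mix_invertible_def det_slice_comb_cpd invertible_det_nz)

lemma is_spectrumD:
  assumes "is_spectrum Ks X \<Lambda>"
  shows "vec_in Ks (\<Lambda> r)" "\<Lambda> r \<noteq> 0"
    and "vec_in Ks \<gamma> \<Longrightarrow> det (slice_comb X \<gamma>) = (\<Prod>r\<in>UNIV. vdot (\<Lambda> r) \<gamma>)"
  using assms by (simp_all add: is_spectrum_def vdot_def)

lemma proportional_of_kernel_subset:
  fixes g f :: "complex^'k::finite"
  assumes K: "field_K Ks" and g: "g \<noteq> 0" "vec_in Ks g" and f: "vec_in Ks f"
    and kernel: "\<And>\<delta>. vec_in Ks \<delta> \<Longrightarrow> vdot g \<delta> = 0 \<Longrightarrow> vdot f \<delta> = 0"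
  shows "\<exists>t\<in>Ks. f = t *s g"
proof -
  obtain k0 where k0: "g $ k0 \<noteq> 0" using g(1) by (auto simp: vec_eq_iff)
  define t where "t = f $ k0 / g $ k0"
  have "f $ k = t * g $ k" for k
  proof -
    define \<delta> where "\<delta> = g $ k0 *s axis k 1 - g $ k *s axis k0 1"
    have "vec_in Ks \<delta>"
      unfolding \<delta>_def using K g by (intro vec_in_diff vec_in_smult vec_in_axis) (simp_all add: vec_inD)
    moreover have "vdot g \<delta> = 0"
      by (simp add: \<delta>_def vdot_diff_right vdot_smult_right vdot_axis_right)
    ultimately have "vdot f \<delta> = 0" by (rule kernel)
    then have "g $ k0 * f $ k = g $ k * f $ k0"
      by (simp add: \<delta>_def vdot_diff_right vdot_smult_right vdot_axis_right)
    then show ?thesis using k0 by (simp add: t_def field_simps)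
  qed
  moreover have "t \<in> Ks" unfolding t_def using K f g by (simp add: field_K_divide vec_inD)
  ultimately show ?thesis by (auto simp: vec_eq_iff)
qed

lemma finite_nat_roots_affine:
  assumes "a \<noteq> 0 \<or> b \<noteq> 0"
  shows "finite {n::nat. a + of_nat n * (b::complex) = 0}"
proof (cases "b = 0")
  case False
  have "{n::nat. a + of_nat n * b = 0} \<subseteq> of_nat -` {- a / b}"
    using False by (auto simp: field_simps add_eq_0_iff)
  moreover have "finite (of_nat -` {- a / b} :: nat set)"
    by (rule finite_vimageI) (simp_all add: inj_of_nat)
  ultimately show ?thesis by (rule finite_subset)
qed (use assms in simp)

lemma exists_avoiding_kernels:
  fixes g :: "complex^'k::finite" and f :: "'r \<Rightarrow> complex^'k"
  assumes K: "field_K Ks"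
    and escape: "\<And>r. \<exists>\<delta>. vec_in Ks \<delta> \<and> vdot g \<delta> = 0 \<and> vdot (f r) \<delta> \<noteq> 0"
    and S: "finite S"
  shows "\<exists>\<gamma>. vec_in Ks \<gamma> \<and> vdot g \<gamma> = 0 \<and> (\<forall>r\<in>S. vdot (f r) \<gamma> \<noteq> 0)"
  using S
proof (induction S rule: finite_induct)
  case empty
  show ?case using K by (intro exI[of _ 0]) simp
next
  case (insert r0 S)
  obtain \<gamma> where \<gamma>: "vec_in Ks \<gamma>" "vdot g \<gamma> = 0" "\<forall>r\<in>S. vdot (f r) \<gamma> \<noteq> 0"
    using insert.IH by blast
  obtain \<delta> where \<delta>: "vec_in Ks \<delta>" "vdot g \<delta> = 0" "vdot (f r0) \<delta> \<noteq> 0"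
    using escape by blast
  have "finite (\<Union>r\<in>insert r0 S. {n::nat. vdot (f r) \<gamma> + of_nat n * vdot (f r) \<delta> = 0})"
    using insert.hyps(1) \<gamma>(3) \<delta>(3) by (auto intro!: finite_nat_roots_affine)
  then obtain n :: nat where n: "\<forall>r\<in>insert r0 S. vdot (f r) \<gamma> + of_nat n * vdot (f r) \<delta> \<noteq> 0"
    using ex_new_if_finite[OF infinite_UNIV_nat] by blast
  show ?case
  proof (intro exI conjI)
    show "vec_in Ks (\<gamma> + of_nat n *s \<delta>)"
      using K \<gamma>(1) \<delta>(1) by (intro vec_in_add vec_in_smult) simp_all
    show "vdot g (\<gamma> + of_nat n *s \<delta>) = 0"
      by (simp add: vdot_add_right vdot_smult_right \<gamma>(2) \<delta>(2))
    show "\<forall>r\<in>insert r0 S. vdot (f r) (\<gamma> + of_nat n *s \<delta>) \<noteq> 0"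
      using n by (simp add: vdot_add_right vdot_smult_right)
  qed
qed

text \<open>Otherwise each factor is nonzero somewhere on the kernel of \<open>g\<close>, and a generic point of that
  kernel avoids all their zero sets at once.\<close>

lemma proportional_factor_of_prod_vanishing:
  fixes g :: "complex^'k::finite" and f :: "'r::finite \<Rightarrow> complex^'k"
  assumes K: "field_K Ks" and g: "g \<noteq> 0" "vec_in Ks g" and f: "\<And>r. vec_in Ks (f r)"
    and vanish: "\<And>\<gamma>. vec_in Ks \<gamma> \<Longrightarrow> vdot g \<gamma> = 0 \<Longrightarrow> (\<Prod>r\<in>UNIV. vdot (f r) \<gamma>) = 0"
  shows "\<exists>r. \<exists>t\<in>Ks. f r = t *s g"
proof (rule ccontr)
  assume none: "\<not> (\<exists>r. \<exists>t\<in>Ks. f r = t *s g)"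
  have escape: "\<exists>\<delta>. vec_in Ks \<delta> \<and> vdot g \<delta> = 0 \<and> vdot (f r) \<delta> \<noteq> 0" for r
  proof (rule ccontr)
    assume "\<not> (\<exists>\<delta>. vec_in Ks \<delta> \<and> vdot g \<delta> = 0 \<and> vdot (f r) \<delta> \<noteq> 0)"
    then have "\<exists>t\<in>Ks. f r = t *s g"
      by (intro proportional_of_kernel_subset[OF K g f]) blast
    then show False using none by blast
  qed
  obtain \<gamma> where \<gamma>: "vec_in Ks \<gamma>" "vdot g \<gamma> = 0" "\<forall>r\<in>UNIV. vdot (f r) \<gamma> \<noteq> 0"
    using exists_avoiding_kernels[of Ks g f UNIV, OF K escape finite_class.finite_UNIV] by blast
  then show False using vanish[OF \<gamma>(1,2)] by (simp add: prod_zero_iff)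
qed

lemma column_in_spectrum_cpd:
  fixes A B :: "complex^'r::finite^'r" and C :: "complex^'r^'k::finite"
  assumes K: "field_K Ks" and C: "mat_in Ks C" "column k C \<noteq> 0"
    and spectrum: "is_spectrum Ks (cpd A B C) \<Lambda>"
  shows "\<exists>j. kspan Ks (\<Lambda> j) = kspan Ks (column k C)"
proof -
  have "(\<Prod>j\<in>UNIV. vdot (\<Lambda> j) \<gamma>) = 0" if "vec_in Ks \<gamma>" "vdot (column k C) \<gamma> = 0" for \<gamma>
    using that by (simp add: is_spectrumD(3)[OF spectrum, symmetric] det_slice_comb_cpd prod_zero_iff) blast
  then obtain j t where "t \<in> Ks" "\<Lambda> j = t *s column k C"
    using proportional_factor_of_prod_vanishing[OF K C(2) vec_in_column[OF C(1)]]
      is_spectrumD(1)[OF spectrum] by blast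
  moreover have "t \<noteq> 0" using calculation is_spectrumD(2)[OF spectrum, of j] by auto
  ultimately show ?thesis using kspan_smult[OF K] by metis
qed

lemma JGE_vector_cpd_column:
  fixes A B :: "complex^'r::finite^'r" and C :: "complex^'r^'k::finite"
  assumes A: "invertible A" and B: "invertible B" and x: "x \<noteq> 0"
    and jge: "\<And>l. slice (cpd A B C) l *v x = lam $ l *s y"
  shows "\<exists>s t. column s C = t *s lam"
proof -
  define z where "z = x v* B"
  have "z \<noteq> 0"
    using x by (simp add: z_def vector_matrix_eq_0_iff[OF B])
  then obtain s where s: "z $ s \<noteq> 0" by (auto simp: vec_eq_iff)
  define u where "u = matrix_inv A *v y"
  have "C $ l $ s * z $ s = lam $ l * u $ s" for l
  proof -
    have "(\<chi> r. C $ l $ r * z $ r) = matrix_inv A *v (slice (cpd A B C) l *v x)"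
      by (simp only: slice_cpd_mult matrix_inv_cancel(2)[OF A] z_def)
    also have "\<dots> = lam $ l *s u"
      by (simp only: jge vector_scalar_commute u_def)
    finally show ?thesis by (metis vec_lambda_beta vector_smult_component)
  qed
  then have "column s C = (u $ s / z $ s) *s lam"
    using s by (simp add: vec_eq_iff column_def field_simps)
  then show ?thesis by blast
qed

lemma spec_var_le:
  fixes \<Lambda>T \<Lambda>W :: "'r::finite \<Rightarrow> complex^'k" and C :: "complex^'r^'k"
  assumes columns: "\<And>k. \<exists>j. kspan Ks (\<Lambda>T j) = kspan Ks (column k C)"
    and bound: "\<And>i. Min (range (\<lambda>k. chordal Ks (kspan Ks (column k C)) (kspan Ks (\<Lambda>W i)))) \<le> b"
  shows "spec_var Ks \<Lambda>T \<Lambda>W \<le> b"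
  unfolding spec_var_def
proof (subst Max_le_iff, simp_all, intro allI)
  fix i
  obtain k where k: "Min (range (\<lambda>k. chordal Ks (kspan Ks (column k C)) (kspan Ks (\<Lambda>W i))))
      = chordal Ks (kspan Ks (column k C)) (kspan Ks (\<Lambda>W i))"
  proof -
    have "Min (range (\<lambda>k. chordal Ks (kspan Ks (column k C)) (kspan Ks (\<Lambda>W i))))
        \<in> range (\<lambda>k. chordal Ks (kspan Ks (column k C)) (kspan Ks (\<Lambda>W i)))"
      by (rule Min_in) auto
    then show ?thesis using that by blast
  qed
  obtain j where j: "kspan Ks (\<Lambda>T j) = kspan Ks (column k C)"
    using columns by blast
  have "Min (range (\<lambda>j. chordal Ks (kspan Ks (\<Lambda>T j)) (kspan Ks (\<Lambda>W i))))
      \<le> chordal Ks (kspan Ks (\<Lambda>T j)) (kspan Ks (\<Lambda>W i))"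
    by (rule Min_le) auto
  also have "\<dots> \<le> b"
    using bound[of i] unfolding j k .
  finally show "Min (range (\<lambda>j. chordal Ks (kspan Ks (\<Lambda>T j)) (kspan Ks (\<Lambda>W i)))) \<le> b" .
qed

section \<open>Ranks and limits\<close>

lemma rank_le_exists:
  fixes X :: "('i::finite,'j::finite,'k::finite) tensor"
  assumes K: "field_K Ks" and X: "tensor_in Ks X"
  shows "\<exists>n. rank_le Ks X n"
proof -
  define N where "N = CARD('i \<times> 'j)"
  obtain h where h: "bij_betw h {0..<N} (UNIV :: ('i \<times> 'j) set)"
    using ex_bij_betw_nat_finite[of "UNIV :: ('i \<times> 'j) set"] unfolding N_def by auto
  define a :: "nat \<Rightarrow> complex^'i" where "a r = axis (fst (h r)) 1" for r
  define b :: "nat \<Rightarrow> complex^'j" where "b r = axis (snd (h r)) 1" for r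
  define c :: "nat \<Rightarrow> complex^'k" where "c r = (\<chi> k. X (fst (h r)) (snd (h r)) k)" for r
  have "X i j k = (\<Sum>r<N. a r $ i * b r $ j * c r $ k)" for i j k
  proof -
    define g where "g p = axis (fst p) (1::complex) $ i * axis (snd p) (1::complex) $ j * X (fst p) (snd p) k" for p
    have "(\<Sum>r<N. a r $ i * b r $ j * c r $ k) = (\<Sum>r\<in>{0..<N}. g (h r))"
      by (simp add: atLeast0LessThan a_def b_def c_def g_def)
    also have "\<dots> = (\<Sum>p\<in>UNIV. g p)"
      by (rule sum.reindex_bij_betw[OF h])
    also have "\<dots> = (\<Sum>p\<in>UNIV. if p = (i, j) then X i j k else 0)"
      by (rule sum.cong) (auto simp: g_def axis_def)
    finally show ?thesis by simp
  qed
  moreover have "\<forall>r<N. vec_in Ks (a r) \<and> vec_in Ks (b r) \<and> vec_in Ks (c r)"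
    using K X by (auto simp: a_def b_def c_def tensor_in_def intro!: vec_in_axis vec_in_vec_lambda)
  ultimately show ?thesis
    unfolding rank_le_def by (intro exI[of _ N] exI[of _ a] exI[of _ b] exI[of _ c]) (simp add: ext)
qed

lemma rank_le_mono:
  assumes K: "field_K Ks" and r: "rank_le Ks X n" and "n \<le> N"
  shows "rank_le Ks X N"
proof -
  obtain a b c where abc: "\<forall>r<n. vec_in Ks (a r) \<and> vec_in Ks (b r) \<and> vec_in Ks (c r)"
    and X: "X = (\<lambda>i j k. \<Sum>r<n. a r $ i * b r $ j * c r $ k)"
    using r unfolding rank_le_def by blast
  define a' where "a' r = (if r < n then a r else 0)" for r
  define b' where "b' r = (if r < n then b r else 0)" for r
  define c' where "c' r = (if r < n then c r else 0)" for r
  have "(\<Sum>r<N. a' r $ i * b' r $ j * c' r $ k) = (\<Sum>r<n. a r $ i * b r $ j * c r $ k)" for i j k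
  proof -
    have "(\<Sum>r<N. a' r $ i * b' r $ j * c' r $ k) = (\<Sum>r<n. a' r $ i * b' r $ j * c' r $ k)"
      by (rule sum.mono_neutral_right) (use \<open>n \<le> N\<close> in \<open>auto simp: a'_def\<close>)
    then show ?thesis by (simp add: a'_def b'_def c'_def)
  qed
  moreover have "\<forall>r<N. vec_in Ks (a' r) \<and> vec_in Ks (b' r) \<and> vec_in Ks (c' r)"
    using abc K by (simp add: a'_def b'_def c'_def)
  ultimately show ?thesis
    unfolding rank_le_def X by (intro exI[of _ a'] exI[of _ b'] exI[of _ c']) auto
qed

lemma rank_le_K_rank:
  assumes K: "field_K Ks" and X: "tensor_in Ks X" and "K_rank Ks X \<le> N"
  shows "rank_le Ks X N"
proof -
  have "rank_le Ks X (K_rank Ks X)"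
    unfolding K_rank_def by (rule LeastI_ex[OF rank_le_exists[OF K X]])
  then show ?thesis using rank_le_mono[OF K _ assms(3)] by blast
qed

lemma rank_le_card_imp_cpd:
  fixes X :: "('r::finite,'r,'k::finite) tensor"
  assumes r: "rank_le Ks X CARD('r)"
  shows "\<exists>A B (C::complex^'r^'k). mat_in Ks A \<and> mat_in Ks B \<and> mat_in Ks C \<and> X = cpd A B C"
proof -
  define N where "N = CARD('r)"
  obtain a b c where abc: "\<forall>r<N. vec_in Ks (a r) \<and> vec_in Ks (b r) \<and> vec_in Ks (c r)"
    and X: "X = (\<lambda>i j k. \<Sum>r<N. a r $ i * b r $ j * c r $ k)"
    using r unfolding rank_le_def N_def by blast
  obtain h where h: "bij_betw h {0..<N} (UNIV :: 'r set)"
    using ex_bij_betw_nat_finite[of "UNIV :: 'r set"] unfolding N_def by auto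
  define g where "g = inv_into {0..<N} h"
  have gh: "g (h r) = r" if "r < N" for r
    unfolding g_def using h that by (auto simp: bij_betw_def inv_into_f_f)
  have g_range: "g \<rho> < N" for \<rho>
    unfolding g_def using h by (metis atLeastLessThan_iff bij_betw_def inv_into_into UNIV_I)
  define A :: "complex^'r^'r" where "A = (\<chi> i \<rho>. a (g \<rho>) $ i)"
  define B :: "complex^'r^'r" where "B = (\<chi> i \<rho>. b (g \<rho>) $ i)"
  define C :: "complex^'r^'k" where "C = (\<chi> i \<rho>. c (g \<rho>) $ i)"
  have "cpd A B C i j k = X i j k" for i j k
  proof -
    have "cpd A B C i j k = (\<Sum>\<rho>\<in>UNIV. a (g \<rho>) $ i * b (g \<rho>) $ j * c (g \<rho>) $ k)"
      by (simp add: cpd_def A_def B_def C_def)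
    also have "\<dots> = (\<Sum>r\<in>{0..<N}. a (g (h r)) $ i * b (g (h r)) $ j * c (g (h r)) $ k)"
      by (rule sum.reindex_bij_betw[OF h, symmetric])
    also have "\<dots> = X i j k"
      by (simp add: atLeast0LessThan gh X)
    finally show ?thesis .
  qed
  moreover have "mat_in Ks A" "mat_in Ks B" "mat_in Ks C"
    using abc g_range by (auto simp: mat_in_def A_def B_def C_def vec_inD)
  ultimately show ?thesis by (metis ext)
qed

lemma border_K_rank_le_K_rank:
  assumes "tensor_in Ks X"
  shows "border_K_rank Ks X \<le> K_rank Ks X"
  unfolding border_K_rank_def
  by (rule Least_le) (use assms in \<open>intro exI[of _ "\<lambda>_. X"], auto\<close>)

lemma border_approximation_cpd:
  fixes W :: "('r::finite,'r,'k::finite) tensor"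
  assumes K: "field_K Ks" and W: "tensor_in Ks W" and border: "border_K_rank Ks W \<le> CARD('r)"
  obtains AA BB :: "nat \<Rightarrow> complex^'r^'r" and CC :: "nat \<Rightarrow> complex^'r^'k"
  where "\<And>m. mat_in Ks (AA m)" "\<And>m. mat_in Ks (BB m)" "\<And>m. mat_in Ks (CC m)"
    and "\<And>i j k. (\<lambda>m. cpd (AA m) (BB m) (CC m) i j k) \<longlonglongrightarrow> W i j k"
proof -
  let ?approx = "\<lambda>n. \<exists>S :: nat \<Rightarrow> ('r,'r,'k) tensor.
      (\<forall>m. tensor_in Ks (S m) \<and> K_rank Ks (S m) \<le> n) \<and> (\<forall>i j k. (\<lambda>m. S m i j k) \<longlonglongrightarrow> W i j k)"
  have "?approx (K_rank Ks W)"
    using W by (intro exI[of _ "\<lambda>_. W"]) auto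
  then have "?approx (border_K_rank Ks W)"
    unfolding border_K_rank_def by (rule LeastI)
  then obtain S where S: "\<And>m. tensor_in Ks (S m)" "\<And>m. K_rank Ks (S m) \<le> CARD('r)"
    and lim: "\<And>i j k. (\<lambda>m. S m i j k) \<longlonglongrightarrow> W i j k"
    using border by (meson order_trans)
  have "\<exists>A B (C::complex^'r^'k). mat_in Ks A \<and> mat_in Ks B \<and> mat_in Ks C \<and> S m = cpd A B C" for m
    using rank_le_card_imp_cpd[OF rank_le_K_rank[OF K S(1,2)]] .
  then obtain AA BB CC where "\<And>m. mat_in Ks (AA m) \<and> mat_in Ks (BB m) \<and> mat_in Ks (CC m :: complex^'r^'k)
      \<and> S m = cpd (AA m) (BB m) (CC m)"
    by metis
  then show ?thesis
    using lim by (intro that[of AA BB CC]) auto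
qed

lemma tendsto_det:
  fixes X :: "'a \<Rightarrow> complex^'n::finite^'n"
  assumes "\<And>i j. ((\<lambda>m. X m $ i $ j) \<longlongrightarrow> Y $ i $ j) F"
  shows "((\<lambda>m. det (X m)) \<longlongrightarrow> det Y) F"
  unfolding det_def by (intro tendsto_intros assms)

lemma tendsto_slice_mult:
  assumes S: "\<And>i j k. (\<lambda>m. S m i j k) \<longlonglongrightarrow> W i j k" and V: "V \<longlonglongrightarrow> v"
  shows "(\<lambda>m. slice (S m) l *v V m) \<longlonglongrightarrow> slice W l *v v"
  by (rule vec_tendstoI)
    (unfold matrix_vector_mult_def slice_def, simp, intro tendsto_intros S tendsto_vec_nth[OF V])

lemma tendsto_det_slice_comb:
  assumes S: "\<And>i j k. (\<lambda>m. S m i j k) \<longlonglongrightarrow> W i j k"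
  shows "(\<lambda>m. det (slice_comb (S m) \<gamma>)) \<longlonglongrightarrow> det (slice_comb W \<gamma>)"
  by (rule tendsto_det) (unfold slice_comb_def, simp, intro tendsto_intros S)

lemma vec_in_limit:
  assumes K: "field_K Ks" and lim: "V \<longlonglongrightarrow> v" and V: "\<And>m. vec_in Ks (V m)"
  shows "vec_in Ks v"
  unfolding vec_in_def
proof
  fix i
  show "v $ i \<in> Ks"
    by (rule Lim_in_closed_set[OF closed_field_K[OF K] _ _ tendsto_vec_nth[OF lim]])
      (use V in \<open>simp_all add: vec_inD\<close>)
qed

section \<open>Spectral lines as joint generalized eigenvalues\<close>

text \<open>Unit JGE vectors \<open>x\<^sub>r = Xs $ r\<close> of \<open>X\<close> with unit eigenvalue directions \<open>u\<^sub>r = Us $ r\<close>, such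
  that \<open>det X(\<gamma>)\<close> is proportional to \<open>\<Prod>\<^sub>r u\<^sub>r\<cdot>\<gamma>\<close>. The companion vector of \<open>x\<^sub>r\<close> is written
  out as \<open>\<Sum>\<^sub>l conj(u\<^sub>r\<^sub>l) X\<^sub>l x\<^sub>r\<close>, so that every condition passes to limits.\<close>

definition jge_frame ::
  "complex set \<Rightarrow> ('r::finite,'r,'k::finite) tensor \<Rightarrow> complex^'k \<Rightarrow> complex^'r^'r \<Rightarrow> complex^'k^'r \<Rightarrow> bool"
  where "jge_frame Ks X \<gamma>0 Xs Us \<longleftrightarrow>
    (\<forall>r. norm (Xs $ r) = 1 \<and> vec_in Ks (Xs $ r) \<and> norm (Us $ r) = 1 \<and> vec_in Ks (Us $ r) \<and>
      (\<forall>l. slice X l *v Xs $ r = Us $ r $ l *s (\<Sum>l'\<in>UNIV. cnj (Us $ r $ l') *s (slice X l' *v Xs $ r)))) \<and>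
    (\<forall>\<gamma>. det (slice_comb X \<gamma>) * (\<Prod>r\<in>UNIV. vdot (Us $ r) \<gamma>0)
      = det (slice_comb X \<gamma>0) * (\<Prod>r\<in>UNIV. vdot (Us $ r) \<gamma>))"

lemma sum_smult_vec: "(\<Sum>l\<in>S. f l *s (y::complex^'n)) = sum f S *s y"
  by (simp add: vec_eq_iff sum_distrib_right)

lemma jge_frameI:
  assumes unit: "\<And>r. norm (Xs $ r) = 1" "\<And>r. norm (Us $ r) = 1"
    and K_vec: "\<And>r. vec_in Ks (Xs $ r)" "\<And>r. vec_in Ks (Us $ r)"
    and jge: "\<And>r l. slice X l *v Xs $ r = Us $ r $ l *s Y r"
    and det: "\<And>\<gamma>. det (slice_comb X \<gamma>) = \<kappa> * (\<Prod>r\<in>UNIV. vdot (Us $ r) \<gamma>)"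
  shows "jge_frame Ks X \<gamma>0 Xs Us"
proof -
  have "(\<Sum>l\<in>UNIV. cnj (Us $ r $ l) *s (slice X l *v Xs $ r)) = Y r" for r
  proof -
    have "vdot (vcnj (Us $ r)) (Us $ r) = 1"
      by (simp add: of_real_norm_vec_square[symmetric] unit)
    then show ?thesis by (simp add: jge vector_smult_assoc sum_smult_vec vdot_def)
  qed
  then show ?thesis
    unfolding jge_frame_def using unit K_vec by (simp add: jge det mult_ac)
qed

lemma slice_cpd_axis:
  assumes "x v* B = axis r 1"
  shows "slice (cpd A B C) l *v x = C $ l $ r *s (A *v axis r 1)"
proof -
  have "(\<chi> s. C $ l $ s * axis r 1 $ s) = C $ l $ r *s axis r (1::complex)"
    by (simp add: vec_eq_iff axis_def)
  then show ?thesis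
    by (simp add: slice_cpd_mult assms vector_scalar_commute)
qed

lemma jge_frame_cpd:
  fixes A B :: "complex^'r::finite^'r" and C :: "complex^'r^'k::finite"
  assumes K: "field_K Ks" and ABC: "mat_in Ks A" "mat_in Ks B" "mat_in Ks C"
    and det: "det (slice_comb (cpd A B C) \<gamma>0) \<noteq> 0"
  shows "\<exists>Xs Us. jge_frame Ks (cpd A B C) \<gamma>0 Xs Us"
proof -
  have B: "invertible B" and c_\<gamma>0: "vdot (column r C) \<gamma>0 \<noteq> 0" for r
    using det by (auto simp: det_slice_comb_cpd invertible_det_nz)
  have c0: "column r C \<noteq> 0" for r
    using c_\<gamma>0[of r] by auto
  define x where "x r = axis r 1 v* matrix_inv B" for r
  have xB: "x r v* B = axis r 1" for r
    unfolding x_def by (rule matrix_inv_cancel(4)[OF B])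
  then have x0: "x r \<noteq> 0" for r
    by (metis axis_eq_0_iff one_neq_zero vector_matrix_mult_0)
  have x_in: "vec_in Ks (x r)" for r
    unfolding x_def using K ABC(2) B by (intro vec_in_vector_matrix_mult mat_in_matrix_inv vec_in_axis) simp_all
  define Y where "Y r = (complex_of_real (norm (column r C)) / complex_of_real (norm (x r))) *s (A *v axis r 1)"
    for r
  have column_sgn: "vdot (column r C) \<gamma> = complex_of_real (norm (column r C)) * vdot (sgn (column r C)) \<gamma>" for r \<gamma>
    by (subst smult_norm_sgn_vec[symmetric]) (simp only: vdot_smult_left)
  show ?thesis
  proof (intro exI jge_frameI)
    fix r l
    show "slice (cpd A B C) l *v (\<chi> r. sgn (x r)) $ r = (\<chi> r. sgn (column r C)) $ r $ l *s Y r"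
      using x0[of r] c0[of r]
      by (simp add: sgn_vec_eq_smult vector_scalar_commute slice_cpd_axis[OF xB] Y_def
          vector_smult_assoc column_def field_simps)
  next
    fix \<gamma>
    show "det (slice_comb (cpd A B C) \<gamma>) = det A * det B * (\<Prod>r\<in>UNIV. complex_of_real (norm (column r C)))
        * (\<Prod>r\<in>UNIV. vdot ((\<chi> r. sgn (column r C)) $ r) \<gamma>)"
      by (simp add: det_slice_comb_cpd column_sgn prod.distrib mult_ac)
  qed (use K ABC x0 c0 x_in in \<open>simp_all add: norm_sgn vec_in_sgn vec_in_column\<close>)
qed

lemma jge_frame_limit:
  fixes S :: "nat \<Rightarrow> ('r::finite,'r,'k::finite) tensor"
  assumes K: "field_K Ks" and S: "\<And>i j k. (\<lambda>m. S m i j k) \<longlonglongrightarrow> W i j k"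
    and X: "XX \<longlonglongrightarrow> Xs" and U: "UU \<longlonglongrightarrow> Us"
    and frames: "\<And>m. jge_frame Ks (S m) \<gamma>0 (XX m) (UU m)"
  shows "jge_frame Ks W \<gamma>0 Xs Us"
proof -
  note frame = frames[unfolded jge_frame_def]
  have X_r: "(\<lambda>m. XX m $ r) \<longlonglongrightarrow> Xs $ r" and U_r: "(\<lambda>m. UU m $ r) \<longlonglongrightarrow> Us $ r" for r
    using X U by (auto intro: tendsto_vec_nth)
  have unit: "norm (Xs $ r) = 1" "norm (Us $ r) = 1" for r
    using LIMSEQ_unique[OF tendsto_norm[OF X_r]] LIMSEQ_unique[OF tendsto_norm[OF U_r]] frame by simp_all
  have K_vec: "vec_in Ks (Xs $ r)" "vec_in Ks (Us $ r)" for r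
    using vec_in_limit[OF K X_r] vec_in_limit[OF K U_r] frame by simp_all
  have rel: "slice W l *v Xs $ r = Us $ r $ l *s (\<Sum>l'\<in>UNIV. cnj (Us $ r $ l') *s (slice W l' *v Xs $ r))"
    for r l
  proof (rule LIMSEQ_unique)
    show "(\<lambda>m. slice (S m) l *v XX m $ r) \<longlonglongrightarrow> slice W l *v Xs $ r"
      by (rule tendsto_slice_mult[OF S X_r])
    have "(\<lambda>m. UU m $ r $ l *s (\<Sum>l'\<in>UNIV. cnj (UU m $ r $ l') *s (slice (S m) l' *v XX m $ r)))
        \<longlonglongrightarrow> Us $ r $ l *s (\<Sum>l'\<in>UNIV. cnj (Us $ r $ l') *s (slice W l' *v Xs $ r))"
      by (rule vec_tendstoI) (simp add: sum_component,
          intro tendsto_intros tendsto_vec_nth[OF U_r] tendsto_vec_nth[OF tendsto_slice_mult[OF S X_r]])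
    moreover have "slice (S m) l *v XX m $ r
        = UU m $ r $ l *s (\<Sum>l'\<in>UNIV. cnj (UU m $ r $ l') *s (slice (S m) l' *v XX m $ r))" for m
      using frame by blast
    ultimately show "(\<lambda>m. slice (S m) l *v XX m $ r)
        \<longlonglongrightarrow> Us $ r $ l *s (\<Sum>l'\<in>UNIV. cnj (Us $ r $ l') *s (slice W l' *v Xs $ r))"
      by (simp only:)
  qed
  have prod_lim: "(\<lambda>m. \<Prod>r\<in>UNIV. vdot (UU m $ r) \<gamma>) \<longlonglongrightarrow> (\<Prod>r\<in>UNIV. vdot (Us $ r) \<gamma>)" for \<gamma>
    unfolding vdot_def by (intro tendsto_intros tendsto_vec_nth[OF U_r])
  have det: "det (slice_comb W \<gamma>) * (\<Prod>r\<in>UNIV. vdot (Us $ r) \<gamma>0)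
      = det (slice_comb W \<gamma>0) * (\<Prod>r\<in>UNIV. vdot (Us $ r) \<gamma>)" for \<gamma>
    using frame by (intro LIMSEQ_unique[OF tendsto_mult[OF tendsto_det_slice_comb[OF S] prod_lim]])
      (simp only:, intro tendsto_mult tendsto_det_slice_comb[OF S] prod_lim)
  show ?thesis
    unfolding jge_frame_def using unit K_vec rel det by blast
qed

lemma norm_le_card_of_unit_rows:
  assumes "\<And>r. norm ((X::complex^'n^'r::finite) $ r) = 1"
  shows "norm X \<le> real CARD('r)"
proof -
  have "norm X \<le> (\<Sum>r\<in>UNIV. norm (X $ r))"
    unfolding norm_vec_def by (rule L2_set_le_sum) simp
  then show ?thesis using assms by simp
qed

lemma jge_frame_of_cpd_limit:
  fixes AA BB :: "nat \<Rightarrow> complex^'r::finite^'r" and CC :: "nat \<Rightarrow> complex^'r^'k::finite"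
  assumes K: "field_K Ks"
    and factors: "\<And>m. mat_in Ks (AA m)" "\<And>m. mat_in Ks (BB m)" "\<And>m. mat_in Ks (CC m)"
    and lim: "\<And>i j k. (\<lambda>m. cpd (AA m) (BB m) (CC m) i j k) \<longlonglongrightarrow> W i j k"
    and det: "det (slice_comb W \<gamma>0) \<noteq> 0"
  shows "\<exists>Xs Us. jge_frame Ks W \<gamma>0 Xs Us"
proof -
  define S where "S m = cpd (AA m) (BB m) (CC m)" for m
  have S_lim: "(\<lambda>m. S m i j k) \<longlonglongrightarrow> W i j k" for i j k
    unfolding S_def by (rule lim)
  have "(\<lambda>m. det (slice_comb (S m) \<gamma>0)) \<longlonglongrightarrow> det (slice_comb W \<gamma>0)"
    by (rule tendsto_det_slice_comb[OF S_lim])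
  then have "eventually (\<lambda>m. det (slice_comb (S m) \<gamma>0) \<noteq> 0) sequentially"
    by (rule tendsto_imp_eventually_ne[OF _ det])
  then obtain N0 where N0: "\<And>m. m \<ge> N0 \<Longrightarrow> det (slice_comb (S m) \<gamma>0) \<noteq> 0"
    unfolding eventually_sequentially by blast
  have "\<exists>Xs Us. jge_frame Ks (S (m + N0)) \<gamma>0 Xs Us" for m
    unfolding S_def using N0[of "m + N0"] by (intro jge_frame_cpd[OF K factors]) (simp add: S_def)
  then obtain XX UU where frames: "\<And>m. jge_frame Ks (S (m + N0)) \<gamma>0 (XX m) (UU m)"
    by metis
  have "norm (XX m, UU m) \<le> 2 * real CARD('r)" for m
    using norm_Pair_le[of "XX m" "UU m"] norm_le_card_of_unit_rows[of "XX m"]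
      norm_le_card_of_unit_rows[of "UU m"] frames[of m] unfolding jge_frame_def by simp
  then have "bounded (range (\<lambda>m. (XX m, UU m)))"
    unfolding bounded_iff by blast
  then obtain lim \<phi> where \<phi>: "strict_mono \<phi>" and conv: "((\<lambda>m. (XX m, UU m)) \<circ> \<phi>) \<longlonglongrightarrow> lim"
    using bounded_imp_convergent_subsequence by blast
  have "strict_mono (\<lambda>m. \<phi> m + N0)"
    using \<phi> by (simp add: strict_mono_def)
  then have "(\<lambda>m. S (\<phi> m + N0) i j k) \<longlonglongrightarrow> W i j k" for i j k
    using LIMSEQ_subseq_LIMSEQ[OF S_lim] by (simp add: o_def)
  moreover have "(\<lambda>m. XX (\<phi> m)) \<longlonglongrightarrow> fst lim" "(\<lambda>m. UU (\<phi> m)) \<longlonglongrightarrow> snd lim"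
    using tendsto_fst[OF conv] tendsto_snd[OF conv] by (simp_all add: o_def)
  moreover have "jge_frame Ks (S (\<phi> m + N0)) \<gamma>0 (XX (\<phi> m)) (UU (\<phi> m))" for m
    by (rule frames)
  ultimately have "jge_frame Ks W \<gamma>0 (fst lim) (snd lim)"
    by (rule jge_frame_limit[OF K])
  then show ?thesis by blast
qed

lemma mat_in_slice: "tensor_in Ks X \<Longrightarrow> mat_in Ks (slice X l)"
  by (simp add: tensor_in_def mat_in_def slice_def)

lemma jge_frame_spectral_direction:
  fixes W :: "('r::finite,'r,'k::finite) tensor"
  assumes K: "field_K Ks" and frame: "jge_frame Ks W \<gamma>0 Xs Us"
    and det: "det (slice_comb W \<gamma>0) \<noteq> 0" and spectrum: "is_spectrum Ks W \<Lambda>"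
  shows "\<exists>r. \<exists>t\<in>Ks. Us $ r = t *s \<Lambda> i"
proof (rule proportional_factor_of_prod_vanishing[OF K is_spectrumD(2,1)[OF spectrum]])
  show "vec_in Ks (Us $ r)" for r
    using frame unfolding jge_frame_def by blast
  fix \<gamma> assume "vec_in Ks \<gamma>" "vdot (\<Lambda> i) \<gamma> = 0"
  then have "det (slice_comb W \<gamma>) = 0"
    by (simp add: is_spectrumD(3)[OF spectrum] prod_zero_iff) blast
  moreover have "det (slice_comb W \<gamma>) * (\<Prod>r\<in>UNIV. vdot (Us $ r) \<gamma>0)
      = det (slice_comb W \<gamma>0) * (\<Prod>r\<in>UNIV. vdot (Us $ r) \<gamma>)"
    using frame unfolding jge_frame_def by blast
  ultimately show "(\<Prod>r\<in>UNIV. vdot (Us $ r) \<gamma>) = 0"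
    using det by simp
qed

lemma JGE_value_of_jge_frame:
  fixes W :: "('r::finite,'r,'k::finite) tensor"
  assumes K: "field_K Ks" and W: "tensor_in Ks W" and frame: "jge_frame Ks W \<gamma>0 Xs Us"
    and det: "det (slice_comb W \<gamma>0) \<noteq> 0" and spectrum: "is_spectrum Ks W \<Lambda>"
  shows "JGE_value Ks W (kspan Ks (\<Lambda> i))"
proof -
  obtain r t where t: "t \<in> Ks" "Us $ r = t *s \<Lambda> i"
    using jge_frame_spectral_direction[OF K frame det spectrum] by blast
  define x where "x = Xs $ r"
  define y where "y = (\<Sum>l\<in>UNIV. cnj (Us $ r $ l) *s (slice W l *v x))"
  have x: "vec_in Ks x" "norm x = 1" and U: "norm (Us $ r) = 1" "vec_in Ks (Us $ r)"
    and rel: "\<And>l. slice W l *v x = Us $ r $ l *s y"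
    using frame unfolding jge_frame_def x_def y_def by blast+
  have "t \<noteq> 0"
    using U(1) t(2) by auto
  have jge: "slice W l *v x = \<Lambda> i $ l *s (t *s y)" for l
    using rel[of l] t(2) by (simp add: vector_smult_assoc mult.commute)
  have "y \<noteq> 0"
    using slices_annihilate_imp_zero[OF det, of x] x(2) jge by auto
  moreover have "vec_in Ks y"
    unfolding y_def using K W U(2) x(1)
    by (intro vec_in_sum vec_in_smult vec_in_matrix_vector_mult mat_in_slice field_K_cnj) (simp_all add: vec_inD)
  ultimately have "JGE_pair Ks W x (\<Lambda> i)"
    unfolding JGE_pair_def using K x \<open>t \<noteq> 0\<close> t(1) jge is_spectrumD(1)[OF spectrum]
    by (intro conjI exI[of _ "t *s y"]) (auto simp: vec_in_smult)
  then show ?thesis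
    unfolding JGE_value_def using is_spectrumD(2)[OF spectrum] by blast
qed

lemma spectral_line_JGE_value:
  fixes W :: "('r::finite,'r,'k::finite) tensor"
  assumes K: "field_K Ks" and W: "tensor_in Ks W" and smi: "slice_mix_invertible Ks W"
    and border: "border_K_rank Ks W \<le> CARD('r)" and spectrum: "is_spectrum Ks W \<Lambda>"
  shows "JGE_value Ks W (kspan Ks (\<Lambda> i))"
proof -
  obtain \<gamma>0 where det: "det (slice_comb W \<gamma>0) \<noteq> 0"
    using smi unfolding slice_mix_invertible_def by blast
  obtain AA BB :: "nat \<Rightarrow> complex^'r^'r" and CC :: "nat \<Rightarrow> complex^'r^'k"
    where factors: "\<And>m. mat_in Ks (AA m)" "\<And>m. mat_in Ks (BB m)" "\<And>m. mat_in Ks (CC m)"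
      and lim: "\<And>i j k. (\<lambda>m. cpd (AA m) (BB m) (CC m) i j k) \<longlonglongrightarrow> W i j k"
    using border_approximation_cpd[OF K W border] by blast
  obtain Xs Us where "jge_frame Ks W \<gamma>0 Xs Us"
    using jge_frame_of_cpd_limit[OF K factors lim det] by blast
  then show ?thesis
    by (rule JGE_value_of_jge_frame[OF K W _ det spectrum])
qed

section \<open>Perturbation bounds\<close>

lemma slice_diff: "slice (\<lambda>i j k. X i j k - Y i j k) l = slice X l - slice Y l"
  by (simp add: slice_def vec_eq_iff)

lemma exists_max_norm_component: "\<exists>a. \<forall>r. cmod ((z::complex^'n) $ r) \<le> cmod (z $ a)"
proof -
  have "Max (range (\<lambda>r. cmod (z $ r))) \<in> range (\<lambda>r. cmod (z $ r))"
    by (rule Max_in) simp_all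
  then obtain a where a: "Max (range (\<lambda>r. cmod (z $ r))) = cmod (z $ a)"
    by blast
  have "cmod (z $ r) \<le> Max (range (\<lambda>r. cmod (z $ r)))" for r
    by (rule Max_ge) simp_all
  then show ?thesis
    unfolding a by blast
qed

lemma norm_le_sqrt_card_max_component:
  assumes "\<And>r. cmod ((z::complex^'n) $ r) \<le> cmod (z $ a)"
  shows "norm z \<le> sqrt (real CARD('n)) * cmod (z $ a)"
proof (rule power2_le_imp_le)
  have "(norm z)\<^sup>2 \<le> (\<Sum>r\<in>(UNIV::'n set). (cmod (z $ a))\<^sup>2)"
    unfolding norm_vec_square by (intro sum_mono power_mono assms) simp
  then show "(norm z)\<^sup>2 \<le> (sqrt (real CARD('n)) * cmod (z $ a))\<^sup>2"
    by (simp add: power_mult_distrib)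
qed simp

lemma Min_mult_norm_le:
  assumes "\<And>r. m \<le> cmod (h r)" "0 \<le> m"
  shows "m * norm (z::complex^'n) \<le> norm (\<chi> r. z $ r * h r)"
proof (rule power2_le_imp_le)
  have "m\<^sup>2 * (cmod (z $ r))\<^sup>2 \<le> (cmod (z $ r * h r))\<^sup>2" for r
  proof -
    have "m\<^sup>2 \<le> (cmod (h r))\<^sup>2"
      using assms by (intro power_mono) simp_all
    then show ?thesis
      by (simp add: norm_mult power_mult_distrib mult.commute mult_right_mono)
  qed
  then show "(m * norm z)\<^sup>2 \<le> (norm (\<chi> r. z $ r * h r))\<^sup>2"
    by (simp add: norm_vec_square power_mult_distrib sum_distrib_left sum_mono)
qed simp

lemma JGE_valueE:
  assumes "JGE_value Ks W L"
  obtains x lam y where "vec_in Ks x" "x \<noteq> 0" "vec_in Ks lam" "lam \<noteq> 0" "L = kspan Ks lam"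
    "\<And>l. slice W l *v x = lam $ l *s y"
  using assms unfolding JGE_value_def JGE_pair_def by metis

lemma trilinear_swap12: "trilinear (\<lambda>i j k. X j i k) x y z = trilinear X y x z"
  unfolding trilinear_def by (subst sum.swap) (simp add: mult_ac)

lemma sp_norm_swap12_le: "field_K Ks \<Longrightarrow> sp_norm Ks (\<lambda>i j k. X j i k) \<le> sp_norm Ks X"
  by (rule sp_norm_le, assumption, subst trilinear_swap12, rule sp_norm_ge)

lemma sp_norm_swap12: "field_K Ks \<Longrightarrow> sp_norm Ks (\<lambda>i j k. X j i k) = sp_norm Ks X"
  using sp_norm_swap12_le[of Ks X] sp_norm_swap12_le[of Ks "\<lambda>i j k. X j i k"] by simp

lemma modes_swap12:
  "mode3 (mode2 (mode1 (\<lambda>i j k. X j i k) M) N) P = (\<lambda>i j k. mode3 (mode2 (mode1 X N) M) P j i k)"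
  unfolding mode1_def mode2_def mode3_def
  by (intro ext sum.cong refl, simp only: sum_distrib_left, subst sum.swap, simp only: mult.left_commute)

locale invertible_cpd =
  fixes Ks :: "complex set" and A B :: "complex^'r::finite^'r" and C :: "complex^'r^'k::finite"
  assumes field_K: "field_K Ks"
    and factors_in: "mat_in Ks A" "mat_in Ks B" "mat_in Ks C"
    and invertible: "invertible A" "invertible B"
    and unit_columns: "\<forall>r. norm (column r C) = 1"
begin

abbreviation whitened :: "('r,'r,'k) tensor \<Rightarrow> ('r,'r,'k) tensor" where
  "whitened W \<equiv> mode2 (mode1 (\<lambda>i j k. cpd A B C i j k - W i j k) (matrix_inv A)) (matrix_inv B)"

text \<open>The key identity: if \<open>x\<close> is a JGE vector of \<open>W\<close> whose eigenvalue direction is killed by \<open>P\<close>,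
  then testing \<open>(T - W) \<cdot>\<^sub>1 A\<^sup>-\<^sup>1 \<cdot>\<^sub>2 B\<^sup>-\<^sup>1 \<cdot>\<^sub>3 P\<close> against \<open>x v* B\<close> in the second mode
  removes \<open>W\<close> entirely.\<close>

lemma trilinear_whitened_JGE:
  assumes jge: "\<And>l. slice W l *v x = lam $ l *s y" and P: "P *v lam = 0"
  shows "trilinear (mode3 (whitened W) P) \<alpha> (x v* B) \<beta>
    = vdot \<alpha> (\<chi> r. (x v* B) $ r * vdot \<beta> (P *v column r C))"
proof -
  define z where "z = x v* B"
  define \<beta>' where "\<beta>' = \<beta> v* P"
  define \<kappa> where "\<kappa> = vdot \<alpha> (matrix_inv A *v y)"
  have slice_term: "vdot (\<alpha> v* matrix_inv A) (slice (\<lambda>i j k. cpd A B C i j k - W i j k) l *v x)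
      = (\<Sum>r\<in>UNIV. \<alpha> $ r * (C $ l $ r * z $ r)) - lam $ l * \<kappa>" for l
    by (simp only: slice_diff matrix_vector_mult_diff_rdistrib vdot_diff_right vdot_vector_matrix jge
        vector_scalar_commute vdot_smult_right \<kappa>_def[symmetric] slice_cpd_mult z_def[symmetric]
        matrix_inv_cancel(2)[OF invertible(1)]) (simp add: vdot_def)
  have "trilinear (mode3 (whitened W) P) \<alpha> z \<beta>
      = trilinear (\<lambda>i j k. cpd A B C i j k - W i j k) (\<alpha> v* matrix_inv A) x \<beta>'"
    by (simp only: trilinear_mode1 trilinear_mode2 trilinear_mode3 z_def \<beta>'_def
        matrix_inv_cancel(3)[OF invertible(2)])
  also have "\<dots> = (\<Sum>l\<in>UNIV. \<beta>' $ l * ((\<Sum>r\<in>UNIV. \<alpha> $ r * (C $ l $ r * z $ r)) - lam $ l * \<kappa>))"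
    by (simp only: trilinear_slices slice_term)
  also have "\<dots> = (\<Sum>r\<in>UNIV. \<Sum>l\<in>UNIV. \<beta>' $ l * (\<alpha> $ r * (C $ l $ r * z $ r))) - vdot \<beta>' lam * \<kappa>"
    by (simp add: right_diff_distrib sum_subtractf sum_distrib_left sum_distrib_right vdot_def mult_ac)
      (rule sum.swap)
  also have "vdot \<beta>' lam = 0"
    by (simp add: \<beta>'_def vdot_vector_matrix P)
  also have "(\<Sum>r\<in>UNIV. \<Sum>l\<in>UNIV. \<beta>' $ l * (\<alpha> $ r * (C $ l $ r * z $ r)))
      = (\<Sum>r\<in>UNIV. \<alpha> $ r * (z $ r * vdot \<beta>' (column r C)))"
    by (simp add: vdot_def column_def sum_distrib_left mult_ac)
  also have "\<dots> = vdot \<alpha> (\<chi> r. z $ r * vdot \<beta> (P *v column r C))"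
    by (simp only: \<beta>'_def vdot_vector_matrix) (simp add: vdot_def)
  finally show ?thesis by (simp add: z_def)
qed


lemma norm_whitened_test_le:
  assumes jge: "\<And>l. slice W l *v x = lam $ l *s y" and P: "mat_in Ks P" "P *v lam = 0"
    and x: "vec_in Ks x" and \<beta>: "vec_in Ks \<beta>"
  shows "norm (\<chi> r. (x v* B) $ r * vdot \<beta> (P *v column r C))
    \<le> sp_norm Ks (mode3 (whitened W) P) * norm (x v* B) * norm \<beta>"
proof -
  let ?q = "\<chi> r. (x v* B) $ r * vdot \<beta> (P *v column r C)"
  have "vec_in Ks ?q"
    using field_K factors_in P(1) x \<beta>
    by (intro vec_in_vec_lambda field_K_mult vdot_in_field_K vec_in_matrix_vector_mult vec_in_column)
      (simp_all add: vec_inD vec_in_vector_matrix_mult)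
  then obtain \<alpha> where \<alpha>: "vec_in Ks \<alpha>" "norm \<alpha> = 1" "vdot \<alpha> ?q = complex_of_real (norm ?q)"
    using exists_dual_unit_vec[OF field_K] by blast
  have "norm ?q = cmod (trilinear (mode3 (whitened W) P) \<alpha> (x v* B) \<beta>)"
    by (simp add: trilinear_whitened_JGE[OF jge P(2)] \<alpha>(3))
  also have "\<dots> \<le> sp_norm Ks (mode3 (whitened W) P) * norm \<alpha> * norm (x v* B) * norm \<beta>"
    using field_K factors_in x \<alpha>(1) \<beta> by (intro norm_trilinear_le_sp_norm vec_in_vector_matrix_mult)
  finally show ?thesis using \<alpha>(2) by simp
qed

lemma Min_chordal_columns_le:
  assumes lam: "lam \<noteq> 0" and a: "norm (proj_perp Ks (kspan Ks lam) *v column a C) \<le> b"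
  shows "Min (range (\<lambda>k. chordal Ks (kspan Ks (column k C)) (kspan Ks lam))) \<le> b"
  unfolding Min_chordal_columns_eq[OF field_K unit_columns lam]
  by (rule order_trans[OF Min_le a]) simp_all

lemma JGE_line_bound:
  assumes "JGE_value Ks W L"
  shows "Min (range (\<lambda>k. chordal Ks (kspan Ks (column k C)) L))
    \<le> sqrt (real CARD('r)) * sp_norm Ks (mode3 (whitened W) (proj_perp Ks L))"
proof -
  obtain x lam y where x: "vec_in Ks x" "x \<noteq> 0" and lam: "vec_in Ks lam" "lam \<noteq> 0"
    and L: "L = kspan Ks lam" and jge: "\<And>l. slice W l *v x = lam $ l *s y"
    using JGE_valueE[OF assms] by blast
  define P where "P = proj_perp Ks (kspan Ks lam)"
  define S where "S = sp_norm Ks (mode3 (whitened W) P)"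
  define z where "z = x v* B"
  have P: "mat_in Ks P" "P *v lam = 0"
    unfolding P_def using mat_in_proj_perp[OF field_K lam(2,1)] proj_perp_kspan_self[OF field_K lam(2)]
    by simp_all
  obtain a where a: "\<And>r. cmod (z $ r) \<le> cmod (z $ a)"
    using exists_max_norm_component by blast
  have za: "0 < cmod (z $ a)"
  proof (rule ccontr)
    assume "\<not> 0 < cmod (z $ a)"
    then have "z $ r = 0" for r
      using a[of r] by simp
    then have "z = 0"
      by (simp add: vec_eq_iff)
    then show False
      using x(2) by (simp add: z_def vector_matrix_eq_0_iff[OF invertible(2)])
  qed
  obtain \<beta> where \<beta>: "vec_in Ks \<beta>" "norm \<beta> = 1" "vdot \<beta> (P *v column a C) = complex_of_real (norm (P *v column a C))"
    using exists_dual_unit_vec[OF field_K] field_K factors_in P(1) by (meson vec_in_column vec_in_matrix_vector_mult)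
  have "cmod (z $ a) * norm (P *v column a C) \<le> norm (\<chi> r. z $ r * vdot \<beta> (P *v column r C))"
    using Finite_Cartesian_Product.norm_nth_le[where x = "\<chi> r. z $ r * vdot \<beta> (P *v column r C)" and i = a] \<beta>(3)
    by (simp add: norm_mult)
  also have "\<dots> \<le> S * norm z"
    using norm_whitened_test_le[OF jge P x(1) \<beta>(1)] \<beta>(2) by (simp add: S_def z_def)
  also have "\<dots> \<le> S * (sqrt (real CARD('r)) * cmod (z $ a))"
    unfolding S_def by (intro mult_left_mono norm_le_sqrt_card_max_component a sp_norm_nonneg field_K)
  finally have "norm (P *v column a C) \<le> sqrt (real CARD('r)) * S"
    using za by (simp add: mult.commute mult.left_commute)
  then show ?thesis
    unfolding L P_def S_def by (rule Min_chordal_columns_le[OF lam(2)])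
qed


lemma JGE_line_bound_card_2:
  assumes card: "CARD('k) = 2" and "JGE_value Ks W L"
  shows "Min (range (\<lambda>k. chordal Ks (kspan Ks (column k C)) L))
    \<le> sp_norm Ks (mode3 (whitened W) (proj_perp Ks L))"
proof -
  obtain x lam y where x: "vec_in Ks x" "x \<noteq> 0" and lam: "vec_in Ks lam" "lam \<noteq> 0"
    and L: "L = kspan Ks lam" and jge: "\<And>l. slice W l *v x = lam $ l *s y"
    using JGE_valueE[OF assms(2)] by blast
  define P where "P = proj_perp Ks (kspan Ks lam)"
  define m where "m = Min (range (\<lambda>r. norm (P *v column r C)))"
  have P: "mat_in Ks P" "P *v lam = 0"
    unfolding P_def using mat_in_proj_perp[OF field_K lam(2,1)] proj_perp_kspan_self[OF field_K lam(2)]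
    by simp_all
  obtain v where v: "vec_in Ks v" "norm v = 1" and Pv: "\<And>c. P *v c = hinner c v *s v"
    using proj_perp_card_2[OF card field_K lam(2,1)] unfolding P_def by blast
  have "vdot (vcnj v) v = 1"
    using v(2) by (simp add: of_real_norm_vec_square[symmetric])
  then have vdot_P: "vdot (vcnj v) (P *v c) = hinner c v" for c
    by (simp add: Pv vdot_smult_right)
  have m: "m \<le> cmod (hinner (column r C) v)" for r
    unfolding m_def using v(2) by (intro Min_le) (auto simp: Pv norm_smult_vec)
  have "0 \<le> m"
    unfolding m_def by (simp add: Min_ge_iff)
  then have "m * norm (x v* B) \<le> norm (\<chi> r. (x v* B) $ r * hinner (column r C) v)"
    using m by (intro Min_mult_norm_le)
  also have "\<dots> \<le> sp_norm Ks (mode3 (whitened W) P) * norm (x v* B)"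
    using norm_whitened_test_le[OF jge P x(1) vec_in_vcnj[OF field_K v(1)]] v(2) by (simp add: vdot_P)
  finally have "m \<le> sp_norm Ks (mode3 (whitened W) P)"
    using x(2) by (simp add: vector_matrix_eq_0_iff[OF invertible(2)])
  then show ?thesis
    unfolding L m_def P_def Min_chordal_columns_eq[OF field_K unit_columns lam(2)] .
qed

lemma norm_proj_column_le_shared_B:
  assumes W: "W = cpd AW B CW" and P: "mat_in Ks P" "P *v column s CW = 0"
  shows "norm (P *v column s C) \<le> sp_norm Ks (mode3 (whitened W) P)"
proof -
  define x where "x = axis s 1 v* matrix_inv B"
  have xB: "x v* B = axis s 1"
    unfolding x_def by (rule matrix_inv_cancel(4)[OF invertible(2)])
  have x: "vec_in Ks x"
    unfolding x_def using field_K factors_in invertible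
    by (intro vec_in_vector_matrix_mult mat_in_matrix_inv vec_in_axis) simp_all
  have jge: "slice W l *v x = column s CW $ l *s (AW *v axis s 1)" for l
    unfolding W by (simp add: slice_cpd_axis[OF xB] column_def)
  obtain \<beta> where \<beta>: "vec_in Ks \<beta>" "norm \<beta> = 1" "vdot \<beta> (P *v column s C) = complex_of_real (norm (P *v column s C))"
    using exists_dual_unit_vec[OF field_K] field_K factors_in P(1) by (meson vec_in_column vec_in_matrix_vector_mult)
  have "norm (P *v column s C) \<le> norm (\<chi> r. (x v* B) $ r * vdot \<beta> (P *v column r C))"
    using Finite_Cartesian_Product.norm_nth_le[where x = "\<chi> r. (x v* B) $ r * vdot \<beta> (P *v column r C)" and i = s]
      \<beta>(3) by (simp add: xB)
  also have "\<dots> \<le> sp_norm Ks (mode3 (whitened W) P)"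
    using norm_whitened_test_le[OF jge P x \<beta>(1)] \<beta>(2) by (simp add: xB)
  finally show ?thesis .
qed

text \<open>The case of a shared first factor reduces to a shared second factor by exchanging the first two
  modes, which leaves the spectral norm unchanged.\<close>

lemma norm_proj_column_le_shared_A:
  assumes W: "W = cpd A BW CW" and P: "mat_in Ks P" "P *v column s CW = 0"
  shows "norm (P *v column s C) \<le> sp_norm Ks (mode3 (whitened W) P)"
proof -
  interpret swapped: invertible_cpd Ks B A C
    using field_K factors_in invertible unit_columns by unfold_locales
  have swap: "(\<lambda>i j k. cpd B A C i j k - cpd BW A CW i j k)
      = (\<lambda>i j k. (\<lambda>i j k. cpd A B C i j k - cpd A BW CW i j k) j i k)"
    by (simp add: cpd_def mult_ac)
  have "norm (P *v column s C) \<le> sp_norm Ks (mode3 (swapped.whitened (cpd BW A CW)) P)"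
    by (rule swapped.norm_proj_column_le_shared_B[OF refl P])
  also have "mode3 (swapped.whitened (cpd BW A CW)) P = (\<lambda>i j k. mode3 (whitened W) P j i k)"
    unfolding swap W by (rule modes_swap12)
  also have "sp_norm Ks \<dots> = sp_norm Ks (mode3 (whitened W) P)"
    by (rule sp_norm_swap12[OF field_K])
  finally show ?thesis .
qed

lemma JGE_line_bound_shared_factor:
  assumes smi: "slice_mix_invertible Ks W" and W: "W = cpd AW BW CW" and shared: "AW = A \<or> BW = B"
    and "JGE_value Ks W L"
  shows "Min (range (\<lambda>k. chordal Ks (kspan Ks (column k C)) L))
    \<le> sp_norm Ks (mode3 (whitened W) (proj_perp Ks L))"
proof -
  obtain x lam y where x: "x \<noteq> 0" and lam: "vec_in Ks lam" "lam \<noteq> 0"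
    and L: "L = kspan Ks lam" and jge: "\<And>l. slice W l *v x = lam $ l *s y"
    using JGE_valueE[OF assms(4)] by blast
  define P where "P = proj_perp Ks (kspan Ks lam)"
  obtain s t where "column s CW = t *s lam"
    using JGE_vector_cpd_column[OF slice_mix_invertible_cpd_imp_invertible[OF smi[unfolded W]] x] jge
    unfolding W by blast
  then have P: "mat_in Ks P" "P *v column s CW = 0"
    unfolding P_def using mat_in_proj_perp[OF field_K lam(2,1)] proj_perp_kspan_smult[OF field_K lam(2)]
    by simp_all
  have "norm (P *v column s C) \<le> sp_norm Ks (mode3 (whitened W) P)"
    using shared norm_proj_column_le_shared_A[OF _ P] norm_proj_column_le_shared_B[OF _ P] W by blast
  then show ?thesis
    unfolding L P_def by (rule Min_chordal_columns_le[OF lam(2)])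
qed


lemma perturbation_bounds:
  assumes W: "tensor_in Ks W" and c: "0 \<le> c"
    and line: "\<And>L. JGE_value Ks W L \<Longrightarrow> Min (range (\<lambda>k. chordal Ks (kspan Ks (column k C)) L))
      \<le> c * sp_norm Ks (mode3 (whitened W) (proj_perp Ks L))"
  shows "(\<forall>L. JGE_value Ks W L \<longrightarrow>
      Min (range (\<lambda>k. chordal Ks (kspan Ks (column k C)) L)) \<le> c * sp_norm Ks (mode3 (whitened W) (proj_perp Ks L))
      \<and> c * sp_norm Ks (mode3 (whitened W) (proj_perp Ks L))
        \<le> c * sp_norm Ks (\<lambda>i j k. cpd A B C i j k - W i j k) / (sigma_min A * sigma_min B))
    \<and> (slice_mix_invertible Ks W \<and> border_K_rank Ks W \<le> CARD('r) \<longrightarrow>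
      (\<forall>\<Lambda>T \<Lambda>W. is_spectrum Ks (cpd A B C) \<Lambda>T \<and> is_spectrum Ks W \<Lambda>W \<longrightarrow>
        spec_var Ks \<Lambda>T \<Lambda>W \<le> c * sp_norm Ks (whitened W)
        \<and> c * sp_norm Ks (whitened W)
          \<le> c * sp_norm Ks (\<lambda>i j k. cpd A B C i j k - W i j k) / (sigma_min A * sigma_min B)))"
proof -
  have whitened_le: "c * sp_norm Ks (whitened W)
      \<le> c * sp_norm Ks (\<lambda>i j k. cpd A B C i j k - W i j k) / (sigma_min A * sigma_min B)"
    using mult_left_mono[OF sp_norm_inverse_modes_le[OF field_K factors_in(1) invertible(1)
        factors_in(2) invertible(2)] c] by simp
  have proj_le: "c * sp_norm Ks (mode3 (whitened W) (proj_perp Ks L)) \<le> c * sp_norm Ks (whitened W)"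
    if "JGE_value Ks W L" for L
    using that by (elim JGE_valueE) (simp add: mult_left_mono[OF sp_norm_mode3_proj_perp_le[OF field_K] c])
  have spectral: "spec_var Ks \<Lambda>T \<Lambda>W \<le> c * sp_norm Ks (whitened W)"
    if W': "slice_mix_invertible Ks W" "border_K_rank Ks W \<le> CARD('r)"
      and spectra: "is_spectrum Ks (cpd A B C) \<Lambda>T" "is_spectrum Ks W \<Lambda>W" for \<Lambda>T \<Lambda>W
  proof (rule spec_var_le)
    show "\<exists>j. kspan Ks (\<Lambda>T j) = kspan Ks (column k C)" for k
      using column_in_spectrum_cpd[OF field_K factors_in(3) _ spectra(1)] unit_columns
      by (metis norm_zero zero_neq_one)
    show "Min (range (\<lambda>k. chordal Ks (kspan Ks (column k C)) (kspan Ks (\<Lambda>W i)))) \<le> c * sp_norm Ks (whitened W)"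
      for i
      using spectral_line_JGE_value[OF field_K W W' spectra(2)] line proj_le by (meson order_trans)
  qed
  show ?thesis
    using line proj_le whitened_le spectral by (meson order_trans)
qed

end

theorem theorem4p3:
  fixes Ks :: "complex set"
    and T W :: "('r::finite, 'r, 'k::finite) tensor"
    and A B :: "complex^'r^'r"
    and C :: "complex^'r^'k"
  defines "E \<equiv> (\<lambda>i j k. T i j k - W i j k)"
  defines "R \<equiv> real CARD('r)"
  assumes K: "field_K Ks"
    and T_in: "tensor_in Ks T" and W_in: "tensor_in Ks W"
    and T_rank: "K_rank Ks T = CARD('r)"
    and ABC_in: "mat_in Ks A" "mat_in Ks B" "mat_in Ks C"
    and A_inv: "invertible A" and B_inv: "invertible B"
    and C_unit: "\<forall>r. norm (column r C) = 1"
    and T_cpd: "T = cpd A B C"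
  shows
    \<comment> \<open>first chain of inequalities (JGE values), spectrum of T = spans of columns of C\<close>
    "(\<forall>L. JGE_value Ks W L \<and> geom_mult Ks W L \<ge> 1 \<longrightarrow>
        Min (range (\<lambda>k. chordal Ks (kspan Ks (column k C)) L))
          \<le> sqrt R * sp_norm Ks (mode3 (mode2 (mode1 E (matrix_inv A)) (matrix_inv B)) (proj_perp Ks L))
      \<and> sqrt R * sp_norm Ks (mode3 (mode2 (mode1 E (matrix_inv A)) (matrix_inv B)) (proj_perp Ks L))
          \<le> sqrt R * sp_norm Ks E / (sigma_min A * sigma_min B))
   \<and> \<comment> \<open>spectral variation bound\<close>
    ((slice_mix_invertible Ks W \<and> border_K_rank Ks W = CARD('r)) \<longrightarrow>
      (\<forall>\<Lambda>T \<Lambda>W. is_spectrum Ks T \<Lambda>T \<and> is_spectrum Ks W \<Lambda>W \<longrightarrow>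
        spec_var Ks \<Lambda>T \<Lambda>W \<le> sqrt R * sp_norm Ks (mode2 (mode1 E (matrix_inv A)) (matrix_inv B))
      \<and> sqrt R * sp_norm Ks (mode2 (mode1 E (matrix_inv A)) (matrix_inv B))
          \<le> sqrt R * sp_norm Ks E / (sigma_min A * sigma_min B)))
   \<and> \<comment> \<open>the factor sqrt R can be dropped in cases (1) and (2)\<close>
    ((CARD('k) = 2 \<or>
      (slice_mix_invertible Ks W \<and> K_rank Ks W = CARD('r) \<and>
       (\<exists>AW BW CW. mat_in Ks AW \<and> mat_in Ks BW \<and> mat_in Ks (CW :: complex^'r^'k) \<and>
          W = cpd AW BW CW \<and> (AW = A \<or> BW = B)))) \<longrightarrow>
      (\<forall>L. JGE_value Ks W L \<and> geom_mult Ks W L \<ge> 1 \<longrightarrow>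
        Min (range (\<lambda>k. chordal Ks (kspan Ks (column k C)) L))
          \<le> sp_norm Ks (mode3 (mode2 (mode1 E (matrix_inv A)) (matrix_inv B)) (proj_perp Ks L))
      \<and> sp_norm Ks (mode3 (mode2 (mode1 E (matrix_inv A)) (matrix_inv B)) (proj_perp Ks L))
          \<le> sp_norm Ks E / (sigma_min A * sigma_min B))
     \<and> ((slice_mix_invertible Ks W \<and> border_K_rank Ks W = CARD('r)) \<or>
         (slice_mix_invertible Ks W \<and> K_rank Ks W = CARD('r) \<and>
          (\<exists>AW BW CW. mat_in Ks AW \<and> mat_in Ks BW \<and> mat_in Ks (CW :: complex^'r^'k) \<and>
             W = cpd AW BW CW \<and> (AW = A \<or> BW = B))) \<longrightarrow>
      (\<forall>\<Lambda>T \<Lambda>W. is_spectrum Ks T \<Lambda>T \<and> is_spectrum Ks W \<Lambda>W \<longrightarrow>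
        spec_var Ks \<Lambda>T \<Lambda>W \<le> sp_norm Ks (mode2 (mode1 E (matrix_inv A)) (matrix_inv B))
      \<and> sp_norm Ks (mode2 (mode1 E (matrix_inv A)) (matrix_inv B))
          \<le> sp_norm Ks E / (sigma_min A * sigma_min B))))"
proof -
  interpret invertible_cpd Ks A B C
    using K ABC_in A_inv B_inv C_unit by unfold_locales
  have E: "E = (\<lambda>i j k. cpd A B C i j k - W i j k)"
    unfolding E_def T_cpd ..
  have unit_line_bound: "Min (range (\<lambda>k. chordal Ks (kspan Ks (column k C)) L))
      \<le> 1 * sp_norm Ks (mode3 (whitened W) (proj_perp Ks L))"
    if "CARD('k) = 2 \<or> (slice_mix_invertible Ks W \<and> (\<exists>AW BW CW. W = cpd AW BW CW \<and> (AW = A \<or> BW = B)))"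
      and "JGE_value Ks W L" for L
    using that JGE_line_bound_card_2 JGE_line_bound_shared_factor by auto
  note sqrt_bounds = perturbation_bounds[OF W_in _ JGE_line_bound]
  note unit_bounds = perturbation_bounds[OF W_in zero_le_one]
  \<comment> \<open>\<open>T_in\<close>, \<open>T_rank\<close> and the multiplicity condition are not needed; in case (2), \<open>K_rank Ks W = CARD('r)\<close>
    bounds the border rank, so the spectral lines of \<open>W\<close> are again JGE values.\<close>
  show ?thesis
    unfolding E R_def T_cpd
    using sqrt_bounds unit_bounds unit_line_bound border_K_rank_le_K_rank[OF W_in]
    by (smt (verit) real_sqrt_ge_zero of_nat_0_le_iff order.refl)
qed

end
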